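(* For every integer $i\ge0$, $D_{p^i-1}E=E^{p^i}$.
   Context: Let $q$ be a power of a prime $p$, $A=\mathbb F_q[T]$, $K_\infty=\mathbb F_q((1/T))$, $C$ the completion of an algebraic closure of $K_\infty$, $\Omega=C\setminus K_\infty$, $\bar\pi$ a fundamental period of the Carlitz module. $E(z)=\bar\pi^{-1}\sum_{a\in A\text{ monic}}\sum_{b\in A}\frac{a}{az+b}$ on $\Omega$. For holomorphic $f$, $\mathcal D_nf$ is defined by $f(z+\varepsilon)=\sum_n(\mathcal D_nf)(z)\varepsilon^n$ for small $\varepsilon\in C$, and $D_n=(-\bar\pi)^{-n}\mathcal D_n$. *)

theory Defs
  imports "HOL-Computational_Algebra.Computational_Algebra" "HOL-Library.Cardinality"
begin

definition av_conv :: "('c::field \<Rightarrow> real) \<Rightarrow> (nat \<Rightarrow> 'c) \<Rightarrow> 'c \<Rightarrow> bool" where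
  "av_conv av s L \<longleftrightarrow> (\<forall>e>0. \<exists>N. \<forall>n\<ge>N. av (s n - L) < e)"

definition av_lim :: "('c::field \<Rightarrow> real) \<Rightarrow> (nat \<Rightarrow> 'c) \<Rightarrow> 'c" where
  "av_lim av s = (THE L. av_conv av s L)"

definition av_sums :: "('c::field \<Rightarrow> real) \<Rightarrow> (nat \<Rightarrow> 'c) \<Rightarrow> 'c \<Rightarrow> bool" where
  "av_sums av f L \<longleftrightarrow> av_conv av (\<lambda>n. \<Sum>i<n. f i) L"

text \<open>K_infinity = F_q((1/T)) is modelled as Laurent series in X = 1/T;
  a polynomial a(T) in A = F_q[T] is mapped to a(1/X).\<close>
definition polyK :: "'k::field poly \<Rightarrow> 'k fls" where
  "polyK a = poly (map_poly fls_const a) fls_X_inv"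

text \<open>(av, iota) is a model of C: iota embeds K_infinity into a complete,
  algebraically closed, non-archimedean valued field 'c, extending the
  absolute value |f| = q^(-v(f)) of K_infinity (so |T| = q), in which the
  elements algebraic over K_infinity are dense (i.e. 'c is the completion of
  an algebraic closure of K_infinity).\<close>
definition is_C :: "('c::field \<Rightarrow> real) \<Rightarrow> ('k::{finite,field} fls \<Rightarrow> 'c) \<Rightarrow> bool" where
  "is_C av \<iota> \<longleftrightarrow>
     (\<forall>x. av x \<ge> 0) \<and> (\<forall>x. av x = 0 \<longleftrightarrow> x = 0) \<and>
     (\<forall>x y. av (x * y) = av x * av y) \<and>
     (\<forall>x y. av (x + y) \<le> max (av x) (av y)) \<and>
     (\<forall>f g. \<iota> (f + g) = \<iota> f + \<iota> g) \<and> (\<forall>f g. \<iota> (f * g) = \<iota> f * \<iota> g) \<and> \<iota> 1 = 1 \<and>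
     (\<forall>f. f \<noteq> 0 \<longrightarrow> av (\<iota> f) = real (CARD('k)) powr (- real_of_int (fls_subdegree f))) \<and>
     (\<forall>s. (\<forall>e>0. \<exists>N. \<forall>m\<ge>N. \<forall>n\<ge>N. av (s m - s n) < e) \<longrightarrow> (\<exists>L. av_conv av s L)) \<and>
     (\<forall>P::'c poly. degree P \<ge> 1 \<longrightarrow> (\<exists>y. poly P y = 0)) \<and>
     (\<forall>c e. e > 0 \<longrightarrow> (\<exists>y. av (c - y) < e \<and>
        (\<exists>P::'k fls poly. P \<noteq> 0 \<and> poly (map_poly \<iota> P) y = 0)))"

text \<open>Carlitz D_i = prod_{j<i} (T^(q^i) - T^(q^j)), and the Carlitz exponential
  e_C(z) = sum_i z^(q^i)/D_i; a fundamental period is a generator of its kernel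
  as an A-module: ker e_C = pibar A.\<close>
definition carlitz_D :: "nat \<Rightarrow> 'k::{finite,field} poly" where
  "carlitz_D i = (\<Prod>j<i. monom 1 (CARD('k) ^ i) - monom 1 (CARD('k) ^ j))"

definition fundamental_period ::
  "('c::field \<Rightarrow> real) \<Rightarrow> ('k::{finite,field} fls \<Rightarrow> 'c) \<Rightarrow> 'c \<Rightarrow> bool" where
  "fundamental_period av \<iota> pibar \<longleftrightarrow> pibar \<noteq> 0 \<and>
     {z. av_sums av (\<lambda>i. z ^ (CARD('k) ^ i) / \<iota> (polyK (carlitz_D i :: 'k poly))) 0}
       = range (\<lambda>a::'k poly. \<iota> (polyK a) * pibar)"

definition Omega :: "('k::{finite,field} fls \<Rightarrow> 'c::field) \<Rightarrow> 'c set" where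
  "Omega \<iota> = - range \<iota>"

definition Eis :: "('c::field \<Rightarrow> real) \<Rightarrow> ('k::{finite,field} fls \<Rightarrow> 'c) \<Rightarrow> 'c \<Rightarrow> 'c \<Rightarrow> 'c" where
  "Eis av \<iota> pibar z = inverse pibar *
     av_lim av (\<lambda>N. \<Sum>a\<in>{a::'k poly. lead_coeff a = 1 \<and> degree a < N}.
        av_lim av (\<lambda>M. \<Sum>b\<in>{b::'k poly. degree b < M}.
           \<iota> (polyK a) / (\<iota> (polyK a) * z + \<iota> (polyK b))))"

definition hyperderiv :: "('c::field \<Rightarrow> real) \<Rightarrow> ('c \<Rightarrow> 'c) \<Rightarrow> nat \<Rightarrow> 'c \<Rightarrow> 'c" where
  "hyperderiv av f n z = (THE c. \<exists>r>0. \<forall>\<epsilon>. av \<epsilon> < r \<longrightarrow>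
       av_sums av (\<lambda>k. c k * \<epsilon> ^ k) (f (z + \<epsilon>))) n"

end

(*
  Expanding a / (a (z + e) + b) as a geometric series in e shows that the n-th hyperderivative
  coefficient of E at z is pibar^-1 sum_a sum_b (-1)^n a^(n+1) / (a z + b)^(n+1).  For
  n = p^i - 1 the summand is (-1)^n (a / (a z + b))^(p^i), and as Frobenius is additive and
  continuous, the double sum of these p^i-th powers is the p^i-th power of pibar E(z).

  The analytic work is the exchange of the e-expansion with the limits over b and over a.  With
  delta > 0 a lower bound for the distance from z to K_inf, the ultrametric inequality gives
  convergence of the inner sums; uniformity in a rests on the decay
    |sum_(deg b < M) a^(n+1) / (a z + b)^(n+1)| <= |a|^-1 delta^-(n+2).
  It holds because, for a finite additive group V, the polynomial P(x) = prod_(v in V) (x + v)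
  is additive: hence sum_v 1 / (x + v + X) = P' / (P(x) + P(X)) with P' constant, and the
  coefficients of this quotient are bounded by a Gauss-norm estimate.
*)
theory Submission
  imports Defs
begin

unbundle fps_syntax

section \<open>Complete non-archimedean fields\<close>

locale complete_nonarch_field =
  fixes av :: "'c::field \<Rightarrow> real"
  assumes av_nonneg: "0 \<le> av x"
    and av_eq_0_iff [simp]: "av x = 0 \<longleftrightarrow> x = 0"
    and av_mult [simp]: "av (x * y) = av x * av y"
    and av_add_le_max: "av (x + y) \<le> max (av x) (av y)"
    and av_complete: "(\<forall>e>0. \<exists>N. \<forall>m\<ge>N. \<forall>n\<ge>N. av (s m - s n) < e) \<Longrightarrow> \<exists>L. av_conv av s L"
begin

lemma av_0 [simp]: "av 0 = 0"
  by simp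

lemma av_pos: "x \<noteq> 0 \<Longrightarrow> 0 < av x"
  using av_nonneg[of x] by (simp add: order_less_le)

lemma av_1 [simp]: "av 1 = 1"
  using av_mult[of 1 1] by simp

lemma av_minus [simp]: "av (- x) = av x"
proof -
  have "(av (- 1) - 1) * (av (- 1) + 1) = 0"
    using av_mult[of "- 1" "- 1"] by (simp add: algebra_simps)
  moreover have "av (- 1) + 1 \<noteq> 0"
    using av_nonneg[of "- 1"] by linarith
  ultimately have "av (- 1) = 1"
    by simp
  then show ?thesis
    using av_mult[of "- 1" x] by simp
qed

lemma av_diff_commute: "av (x - y) = av (y - x)"
  by (metis av_minus minus_diff_eq)

lemma av_inverse [simp]: "av (inverse x) = inverse (av x)"
proof (cases "x = 0")
  case False
  then have "av (inverse x) * av x = 1"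
    using av_mult[of "inverse x" x] by simp
  then show ?thesis
    by (metis inverse_unique mult.commute)
qed simp

lemma av_divide [simp]: "av (x / y) = av x / av y"
  by (simp add: divide_inverse)

lemma av_power [simp]: "av (x ^ n) = av x ^ n"
  by (induction n) simp_all

lemma av_prod: "av (prod f S) = (\<Prod>x\<in>S. av (f x))"
  by (induction S rule: infinite_finite_induct) auto

lemma av_diff_le_max: "av (x - y) \<le> max (av x) (av y)"
  using av_add_le_max[of x "- y"] by simp

lemma av_add_le: "av x \<le> B \<Longrightarrow> av y \<le> B \<Longrightarrow> av (x + y) \<le> B"
  using av_add_le_max[of x y] by simp

lemma av_diff_le: "av x \<le> B \<Longrightarrow> av y \<le> B \<Longrightarrow> av (x - y) \<le> B"
  using av_diff_le_max[of x y] by simp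

lemma av_add_less: "av x < B \<Longrightarrow> av y < B \<Longrightarrow> av (x + y) < B"
  using av_add_le_max[of x y] by simp

lemma av_diff_less: "av x < B \<Longrightarrow> av y < B \<Longrightarrow> av (x - y) < B"
  using av_diff_le_max[of x y] by simp

lemma av_add_eq_right: "av x < av y \<Longrightarrow> av (x + y) = av y"
  using av_add_le_max[of x y] av_add_le_max[of "x + y" "- x"] by (auto simp: max_def split: if_splits)

lemma av_sum_le: "(\<And>i. i \<in> S \<Longrightarrow> av (f i) \<le> B) \<Longrightarrow> 0 \<le> B \<Longrightarrow> av (sum f S) \<le> B"
  by (induction S rule: infinite_finite_induct) (auto intro: av_add_le)

lemma av_sum_less: "(\<And>i. i \<in> S \<Longrightarrow> av (f i) < B) \<Longrightarrow> 0 < B \<Longrightarrow> av (sum f S) < B"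
  by (induction S rule: infinite_finite_induct) (auto intro: av_add_less)

lemma av_conv_iff_tendsto: "av_conv av s L \<longleftrightarrow> (\<lambda>n. av (s n - L)) \<longlonglongrightarrow> 0"
  by (simp add: av_conv_def lim_sequentially dist_real_def av_nonneg)

lemma av_conv_comparison:
  assumes "\<forall>\<^sub>F n in sequentially. av (s n - L) \<le> g n" and "g \<longlonglongrightarrow> 0"
  shows "av_conv av s L"
  unfolding av_conv_iff_tendsto
  by (rule real_tendsto_sandwich[of "\<lambda>_. 0" _ _ g]) (use assms av_nonneg in auto)

lemma av_conv_bound:
  assumes "av_conv av s L" and "\<And>m. m \<ge> N \<Longrightarrow> av (s m - y) \<le> B"
  shows "av (L - y) \<le> B"
proof -
  have "(\<lambda>m. max B (av (s m - L))) \<longlonglongrightarrow> max B 0"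
    using assms(1) by (intro tendsto_max tendsto_const) (simp add: av_conv_iff_tendsto)
  moreover have "av (L - y) \<le> max B (av (s m - L))" if "m \<ge> N" for m
    using av_diff_le_max[of "s m - y" "s m - L"] assms(2)[OF that] by auto
  ultimately have "av (L - y) \<le> max B 0"
    by (intro LIMSEQ_le_const) auto
  moreover have "0 \<le> B"
    using assms(2)[of N] av_nonneg order_trans by blast
  ultimately show ?thesis
    by simp
qed

lemma av_conv_unique: "av_conv av s L \<Longrightarrow> av_conv av s L' \<Longrightarrow> L = L'"
proof -
  assume L: "av_conv av s L" and L': "av_conv av s L'"
  have "av (L - L') \<le> 0 + e" if "e > 0" for e
  proof -
    obtain N where "\<forall>m\<ge>N. av (s m - L') < e"
      using L' \<open>e > 0\<close> unfolding av_conv_def by blast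
    then show ?thesis
      using av_conv_bound[OF L, of N L' e] by fastforce
  qed
  then have "av (L - L') \<le> 0"
    by (rule field_le_epsilon)
  then show ?thesis
    using av_nonneg[of "L - L'"] by simp
qed

lemma av_lim_eqI: "av_conv av s L \<Longrightarrow> av_lim av s = L"
  unfolding av_lim_def using av_conv_unique by blast

lemma av_conv_const: "av_conv av (\<lambda>n. c) c"
  by (simp add: av_conv_def)

lemma av_conv_add:
  assumes "av_conv av s L" and "av_conv av t M"
  shows "av_conv av (\<lambda>n. s n + t n) (L + M)"
proof (rule av_conv_comparison)
  have "av (s n + t n - (L + M)) \<le> av (s n - L) + av (t n - M)" for n
    using av_add_le_max[of "s n - L" "t n - M"] av_nonneg[of "s n - L"] av_nonneg[of "t n - M"]
    by (simp add: algebra_simps)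
  then show "\<forall>\<^sub>F n in sequentially. av (s n + t n - (L + M)) \<le> av (s n - L) + av (t n - M)"
    by simp
  show "(\<lambda>n. av (s n - L) + av (t n - M)) \<longlonglongrightarrow> 0"
    using assms by (intro tendsto_add_zero) (simp_all add: av_conv_iff_tendsto)
qed

lemma av_conv_diff:
  assumes "av_conv av s L" and "av_conv av t M"
  shows "av_conv av (\<lambda>n. s n - t n) (L - M)"
proof -
  have "av (- t n - - M) = av (t n - M)" for n
    by (metis av_minus minus_diff_minus)
  then have "av_conv av (\<lambda>n. - t n) (- M)"
    using assms(2) by (simp add: av_conv_def)
  from av_conv_add[OF assms(1) this] show ?thesis
    by simp
qed

lemma av_conv_mult_left: "av_conv av s L \<Longrightarrow> av_conv av (\<lambda>n. c * s n) (c * L)"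
  by (rule av_conv_comparison[where g = "\<lambda>n. av c * av (s n - L)"])
    (simp_all add: right_diff_distrib[symmetric] av_conv_iff_tendsto tendsto_mult_right_zero)

lemma av_conv_sum:
  "finite S \<Longrightarrow> (\<And>i. i \<in> S \<Longrightarrow> av_conv av (f i) (L i)) \<Longrightarrow>
    av_conv av (\<lambda>n. \<Sum>i\<in>S. f i n) (\<Sum>i\<in>S. L i)"
  by (induction S rule: finite_induct) (simp_all add: av_conv_const av_conv_add)

lemma av_conv_power_CHAR:
  assumes "prime CHAR('c)" and "av_conv av s L"
  shows "av_conv av (\<lambda>n. s n ^ CHAR('c) ^ i) (L ^ CHAR('c) ^ i)"
proof (rule av_conv_comparison)
  have "av (s n ^ CHAR('c) ^ i - L ^ CHAR('c) ^ i) = av (s n - L) ^ CHAR('c) ^ i" for n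
    using freshmans_dream'[OF assms(1) refl, of "s n - L" L i] by simp
  then show "\<forall>\<^sub>F n in sequentially. av (s n ^ CHAR('c) ^ i - L ^ CHAR('c) ^ i) \<le> av (s n - L) ^ CHAR('c) ^ i"
    by simp
  have "0 < CHAR('c) ^ i"
    using assms(1) prime_gt_0_nat by simp
  then show "(\<lambda>n. av (s n - L) ^ CHAR('c) ^ i) \<longlonglongrightarrow> 0"
    using tendsto_power[of _ 0 _ "CHAR('c) ^ i"] assms(2) by (simp add: av_conv_iff_tendsto)
qed

lemma av_conv_sum_power_CHAR:
  assumes "prime CHAR('c)" and "av_conv av (\<lambda>N. \<Sum>x\<in>S N. f x) L"
  shows "av_conv av (\<lambda>N. \<Sum>x\<in>S N. f x ^ CHAR('c) ^ i) (L ^ CHAR('c) ^ i)"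
  using av_conv_power_CHAR[OF assms, of i] by (simp add: freshmans_dream_sum'[OF assms(1) refl])

lemma av_conv_of_tail_bound:
  assumes "\<And>N m. N \<ge> K \<Longrightarrow> m \<ge> N \<Longrightarrow> av (s m - s N) \<le> B N" and "B \<longlonglongrightarrow> 0"
  shows "\<exists>L. av_conv av s L \<and> (\<forall>N\<ge>K. av (L - s N) \<le> B N)"
proof -
  have "\<exists>L. av_conv av s L"
  proof (rule av_complete, intro allI impI)
    fix e :: real
    assume "e > 0"
    obtain N1 where "\<forall>n\<ge>N1. norm (B n - 0) < e"
      using LIMSEQ_D[OF assms(2) \<open>e > 0\<close>] ..
    then have N1: "\<forall>n\<ge>N1. B n < e"
      by auto
    define N where "N = max K N1"
    have "av (s m - s n) < e" if "m \<ge> N" "n \<ge> N" for m n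
    proof -
      have "B N < e"
        using N1 by (simp add: N_def)
      then have "av (s m - s N) < e" "av (s n - s N) < e"
        using assms(1)[of N m] assms(1)[of N n] that by (auto simp: N_def)
      from av_diff_less[OF this] show ?thesis
        by simp
    qed
    then show "\<exists>N. \<forall>m\<ge>N. \<forall>n\<ge>N. av (s m - s n) < e"
      by blast
  qed
  then obtain L where L: "av_conv av s L" ..
  then have "av (L - s N) \<le> B N" if "N \<ge> K" for N
    using av_conv_bound[OF L, of N "s N" "B N"] assms(1) that by blast
  with L show ?thesis
    by blast
qed

lemma av_sums_of_terms_tendsto:
  assumes "(\<lambda>n. av (f n)) \<longlonglongrightarrow> 0"
  shows "\<exists>L. av_sums av f L"
  unfolding av_sums_def
proof (rule av_complete, intro allI impI)
  fix e :: real
  assume "e > 0"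
  obtain K where "\<forall>n\<ge>K. norm (av (f n) - 0) < e"
    using LIMSEQ_D[OF assms \<open>e > 0\<close>] ..
  then have K: "\<forall>n\<ge>K. av (f n) < e"
    by auto
  have tail: "av ((\<Sum>i<m. f i) - (\<Sum>i<K. f i)) < e" if "m \<ge> K" for m
  proof -
    have "(\<Sum>i<m. f i) - (\<Sum>i<K. f i) = (\<Sum>i\<in>{K..<m}. f i)"
      using that by (simp add: sum_diff_nat_ivl lessThan_atLeast0)
    then show ?thesis
      using K \<open>e > 0\<close> by (auto intro!: av_sum_less)
  qed
  have "av ((\<Sum>i<m. f i) - (\<Sum>i<n. f i)) < e" if "m \<ge> K" "n \<ge> K" for m n
    using av_diff_less[OF tail[OF that(1)] tail[OF that(2)]] by simp
  then show "\<exists>N. \<forall>m\<ge>N. \<forall>n\<ge>N. av ((\<Sum>i<m. f i) - (\<Sum>i<n. f i)) < e"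
    by blast
qed

lemma av_sums_terms_tendsto:
  assumes "av_sums av f L"
  shows "(\<lambda>n. av (f n)) \<longlonglongrightarrow> 0"
proof (rule real_tendsto_sandwich[of "\<lambda>_. 0" _ _ "\<lambda>n. max (av ((\<Sum>i<Suc n. f i) - L)) (av ((\<Sum>i<n. f i) - L))"])
  have "av (f n) \<le> max (av ((\<Sum>i<Suc n. f i) - L)) (av ((\<Sum>i<n. f i) - L))" for n
    using av_diff_le_max[of "(\<Sum>i<Suc n. f i) - L" "(\<Sum>i<n. f i) - L"] by simp
  then show "\<forall>\<^sub>F n in sequentially. av (f n) \<le> max (av ((\<Sum>i<Suc n. f i) - L)) (av ((\<Sum>i<n. f i) - L))"
    by simp
  have partial: "(\<lambda>n. av ((\<Sum>i<n. f i) - L)) \<longlonglongrightarrow> 0"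
    using assms by (simp add: av_sums_def av_conv_iff_tendsto)
  from tendsto_max[OF LIMSEQ_Suc[OF partial] partial]
  show "(\<lambda>n. max (av ((\<Sum>i<Suc n. f i) - L)) (av ((\<Sum>i<n. f i) - L))) \<longlonglongrightarrow> 0"
    by (simp only: max.idem)
qed (use av_nonneg in auto)

lemma av_sums_bound:
  assumes "av_sums av f L" and "\<And>n. av (f n) \<le> B"
  shows "av L \<le> B"
proof -
  have "0 \<le> B"
    using assms(2)[of 0] av_nonneg order_trans by blast
  have "av (L - 0) \<le> B"
    using assms(1) unfolding av_sums_def by (rule av_conv_bound[where N = 0]) (simp add: av_sum_le assms(2) \<open>0 \<le> B\<close>)
  then show ?thesis
    by simp
qed

lemma av_sums_diff: "av_sums av f A \<Longrightarrow> av_sums av g B \<Longrightarrow> av_sums av (\<lambda>n. f n - g n) (A - B)"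
  unfolding av_sums_def by (drule (1) av_conv_diff) (simp add: sum_subtractf)

lemma av_sums_mult_left: "av_sums av f A \<Longrightarrow> av_sums av (\<lambda>n. c * f n) (c * A)"
  unfolding av_sums_def by (drule av_conv_mult_left[where c = c]) (simp add: sum_distrib_left)

lemma av_sums_sum:
  "finite S \<Longrightarrow> (\<And>i. i \<in> S \<Longrightarrow> av_sums av (f i) (L i)) \<Longrightarrow>
    av_sums av (\<lambda>n. \<Sum>i\<in>S. f i n) (\<Sum>i\<in>S. L i)"
  unfolding av_sums_def by (drule av_conv_sum[where f = "\<lambda>i n. \<Sum>k<n. f i k"]) (auto simp: sum.swap[of _ S])

lemma av_sums_drop_term:
  assumes "av_sums av f L"
  shows "av_sums av (\<lambda>k. if k = k0 then 0 else f k) (L - f k0)"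
proof -
  have "av_sums av (\<lambda>k. if k = k0 then f k0 else 0) (f k0)"
    unfolding av_sums_def
  proof (rule av_conv_comparison[where g = "\<lambda>_. 0"])
    have "(\<Sum>k<n. if k = k0 then f k0 else 0) = f k0" if "n \<ge> Suc k0" for n
      using that by simp
    then show "\<forall>\<^sub>F n in sequentially. av ((\<Sum>k<n. if k = k0 then f k0 else 0) - f k0) \<le> 0"
      by (intro eventually_sequentiallyI[of "Suc k0"]) simp
  qed (rule tendsto_const)
  from av_sums_diff[OF assms this]
  have "av_sums av (\<lambda>k. f k - (if k = k0 then f k0 else 0)) (L - f k0)" .
  moreover have "(\<lambda>k. f k - (if k = k0 then f k0 else 0)) = (\<lambda>k. if k = k0 then 0 else f k)"
    by auto
  ultimately show ?thesis
    by simp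
qed

lemma av_sums_geometric:
  assumes "av w < 1"
  shows "av_sums av (\<lambda>n. w ^ n) (inverse (1 - w))"
  unfolding av_sums_def
proof (rule av_conv_comparison)
  have "w \<noteq> 1"
    using assms by auto
  moreover have "av (1 - w) = 1"
    using av_add_eq_right[of "- w" 1] assms by simp
  ultimately have "av ((\<Sum>i<n. w ^ i) - inverse (1 - w)) = av w ^ n" for n
    by (simp add: sum_gp_strict inverse_eq_divide diff_divide_distrib)
  then show "\<forall>\<^sub>F n in sequentially. av ((\<Sum>i<n. w ^ i) - inverse (1 - w)) \<le> av w ^ n"
    by simp
  show "(\<lambda>n. av w ^ n) \<longlonglongrightarrow> 0"
    using assms av_nonneg by (intro LIMSEQ_realpow_zero)
qed

lemma av_sums_limit_interchange:
  assumes rows: "\<And>N. N \<ge> K \<Longrightarrow> av_sums av (F N) (S N)"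
    and uniform: "\<And>N n. N \<ge> K \<Longrightarrow> av (F N n - G n) \<le> B N"
    and "B \<longlonglongrightarrow> 0" and "(\<lambda>n. av (G n)) \<longlonglongrightarrow> 0"
  shows "\<exists>L. av_sums av G L \<and> av_conv av S L"
proof -
  obtain L where L: "av_sums av G L"
    using av_sums_of_terms_tendsto[OF assms(4)] ..
  have "av (S N - L) \<le> B N" if "N \<ge> K" for N
    using av_sums_bound[OF av_sums_diff[OF rows[OF that] L]] uniform[OF that] by blast
  then have "\<forall>\<^sub>F N in sequentially. av (S N - L) \<le> B N"
    by (rule eventually_sequentiallyI)
  then have "av_conv av S L"
    using assms(3) by (rule av_conv_comparison)
  with L show ?thesis
    by blast
qed

end

section \<open>Power series\<close>

context complete_nonarch_field
begin

text \<open>In a power series summing to \<open>0\<close>, the lowest nonzero term is dominated by the rest,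
  which is smaller by a factor \<open>|t|\<close> after rescaling the variable by \<open>t\<close>.\<close>
lemma av_lowest_term_le:
  assumes sums: "av_sums av (\<lambda>k. d k * (\<epsilon> * t) ^ k) 0"
    and below: "\<And>k. k < k0 \<Longrightarrow> d k = 0"
    and B: "\<And>k. av (d k * \<epsilon> ^ k) \<le> B"
    and t: "0 < av t" "av t \<le> 1"
  shows "av (d k0 * \<epsilon> ^ k0) \<le> B * av t"
proof -
  have "0 \<le> B"
    using B[of 0] av_nonneg order_trans by blast
  have scale: "av (d k * (\<epsilon> * t) ^ k) = av (d k * \<epsilon> ^ k) * av t ^ k" for k
    by (simp add: power_mult_distrib)
  have "av (if k = k0 then 0 else d k * (\<epsilon> * t) ^ k) \<le> B * av t ^ Suc k0" for k
  proof (cases "k0 < k")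
    case True
    then have "av (if k = k0 then 0 else d k * (\<epsilon> * t) ^ k) = av (d k * \<epsilon> ^ k) * av t ^ k"
      by (simp del: av_mult av_power add: scale)
    also have "\<dots> \<le> B * av t ^ Suc k0"
      using B[of k] True t av_nonneg \<open>0 \<le> B\<close> by (intro mult_mono power_decreasing) auto
    finally show ?thesis .
  next
    case False
    then show ?thesis
      using below[of k] \<open>0 \<le> B\<close> t by (auto simp: order_le_less)
  qed
  from av_sums_bound[OF av_sums_drop_term[OF sums, of k0] this]
  have "av (d k0 * \<epsilon> ^ k0) * av t ^ k0 \<le> (B * av t) * av t ^ k0"
    by (simp del: av_mult av_power add: scale mult_ac)
  then show ?thesis
    using t by simp
qed

lemma av_sums_lowest_coeff_eq_0:
  assumes w: "0 < av w" "av w < 1" and "0 < r"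
    and sums: "\<And>\<epsilon>. av \<epsilon> < r \<Longrightarrow> av_sums av (\<lambda>k. d k * \<epsilon> ^ k) 0"
    and below: "\<And>k. k < k0 \<Longrightarrow> d k = 0"
  shows "d k0 = 0"
proof -
  obtain m where "av w ^ m < r"
    using real_arch_pow_inv[OF \<open>0 < r\<close> w(2)] by blast
  define \<epsilon> where "\<epsilon> = w ^ m"
  have "av \<epsilon> < r" "\<epsilon> \<noteq> 0"
    using \<open>av w ^ m < r\<close> w(1) by (auto simp: \<epsilon>_def)
  have "convergent (\<lambda>k. av (d k * \<epsilon> ^ k))"
    using av_sums_terms_tendsto[OF sums[OF \<open>av \<epsilon> < r\<close>]] by (rule convergentI)
  then obtain B where B: "\<And>k. av (d k * \<epsilon> ^ k) \<le> B"
    by (metis BseqE convergent_imp_Bseq real_norm_def abs_le_iff)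
  have "av (d k0 * \<epsilon> ^ k0) \<le> B * av (w ^ j)" for j
  proof (rule av_lowest_term_le[OF sums below B])
    show "0 < av (w ^ j)" "av (w ^ j) \<le> 1"
      using w by (auto simp: power_le_one)
    then show "av (\<epsilon> * w ^ j) < r"
      using \<open>av \<epsilon> < r\<close> av_nonneg[of \<epsilon>] mult_left_le[of "av (w ^ j)" "av \<epsilon>"] by simp
  qed
  moreover have "(\<lambda>j. B * av (w ^ j)) \<longlonglongrightarrow> 0"
    using w by (simp add: tendsto_mult_right_zero LIMSEQ_realpow_zero)
  ultimately have "av (d k0 * \<epsilon> ^ k0) \<le> 0"
    by (intro LIMSEQ_le_const) auto
  then show ?thesis
    using \<open>\<epsilon> \<noteq> 0\<close> av_nonneg[of "d k0 * \<epsilon> ^ k0"] by simp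
qed

lemma av_power_series_unique:
  assumes w: "0 < av w" "av w < 1" and "0 < r" "0 < r'"
    and c: "\<And>\<epsilon>. av \<epsilon> < r \<Longrightarrow> av_sums av (\<lambda>k. c k * \<epsilon> ^ k) (f \<epsilon>)"
    and c': "\<And>\<epsilon>. av \<epsilon> < r' \<Longrightarrow> av_sums av (\<lambda>k. c' k * \<epsilon> ^ k) (f \<epsilon>)"
  shows "c = c'"
proof -
  have sums: "av_sums av (\<lambda>k. (c k - c' k) * \<epsilon> ^ k) 0" if "av \<epsilon> < min r r'" for \<epsilon>
    using av_sums_diff[OF c[of \<epsilon>] c'[of \<epsilon>]] that by (simp add: left_diff_distrib)
  have "c k - c' k = 0" for k
  proof (induction k rule: less_induct)
    case (less k)
    have "0 < min r r'"
      using assms by simp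
    from av_sums_lowest_coeff_eq_0[OF w this sums less.IH] show ?case .
  qed
  then show ?thesis
    by auto
qed

lemma av_power_series_terms_tendsto_0:
  assumes "\<And>n. av (c n) * r ^ n \<le> C" and "av \<epsilon> < r"
  shows "(\<lambda>n. av (c n * \<epsilon> ^ n)) \<longlonglongrightarrow> 0"
proof (rule real_tendsto_sandwich[of "\<lambda>_. 0" _ _ "\<lambda>n. C * (av \<epsilon> / r) ^ n"])
  have "0 < r"
    using assms(2) av_nonneg[of \<epsilon>] by linarith
  have "av (c n * \<epsilon> ^ n) \<le> C * (av \<epsilon> / r) ^ n" for n
  proof -
    have "av (c n * \<epsilon> ^ n) = (av (c n) * r ^ n) * (av \<epsilon> / r) ^ n"
      using \<open>0 < r\<close> by (simp add: power_divide)
    also have "\<dots> \<le> C * (av \<epsilon> / r) ^ n"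
      using \<open>0 < r\<close> av_nonneg by (intro mult_right_mono assms(1)) simp
    finally show ?thesis .
  qed
  then show "\<forall>\<^sub>F n in sequentially. av (c n * \<epsilon> ^ n) \<le> C * (av \<epsilon> / r) ^ n"
    by simp
  show "(\<lambda>n. C * (av \<epsilon> / r) ^ n) \<longlonglongrightarrow> 0"
    using assms(2) \<open>0 < r\<close> av_nonneg[of \<epsilon>] by (intro tendsto_mult_right_zero LIMSEQ_realpow_zero) auto
qed (simp_all add: av_nonneg)

lemma av_diff_mult_power_le:
  assumes "av (x - y) * r ^ n \<le> B" and "av \<epsilon> \<le> r"
  shows "av (y * \<epsilon> ^ n - x * \<epsilon> ^ n) \<le> B"
proof -
  have "av (y * \<epsilon> ^ n - x * \<epsilon> ^ n) = av (x - y) * av \<epsilon> ^ n"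
    by (simp add: left_diff_distrib[symmetric] av_diff_commute[of y])
  also have "\<dots> \<le> av (x - y) * r ^ n"
    using assms(2) av_nonneg by (intro mult_left_mono power_mono) auto
  finally show ?thesis
    using assms(1) by linarith
qed

end

section \<open>The additive polynomial of a finite additive group\<close>

definition vanishing_poly :: "'c::field set \<Rightarrow> 'c poly" where
  "vanishing_poly V = (\<Prod>v\<in>V. [:v, 1:])"

lemma poly_vanishing_poly: "poly (vanishing_poly V) y = (\<Prod>v\<in>V. v + y)"
  by (simp add: vanishing_poly_def poly_prod)

lemma degree_vanishing_poly: "finite V \<Longrightarrow> degree (vanishing_poly V) = card V"
  unfolding vanishing_poly_def by (subst degree_prod_eq_sum_degree) auto

lemma lead_coeff_vanishing_poly: "lead_coeff (vanishing_poly V) = 1"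
  by (simp add: vanishing_poly_def lead_coeff_prod)

lemma degree_pderiv_le: "degree (pderiv p) \<le> degree p - 1"
  by (rule degree_le) (auto simp: coeff_pderiv coeff_eq_0)

lemma fps_nth_inverse_linear:
  fixes c :: "'c::field"
  assumes "c \<noteq> 0"
  shows "inverse (fps_const c + fps_X) $ n = (-1) ^ n / c ^ Suc n"
proof -
  have "(fps_const c + fps_X) * Abs_fps (\<lambda>n. (-1) ^ n / c ^ Suc n) = 1"
  proof (rule fps_ext)
    fix n
    show "((fps_const c + fps_X) * Abs_fps (\<lambda>n. (-1) ^ n / c ^ Suc n)) $ n = 1 $ n"
      using assms by (cases n) (simp_all add: distrib_right field_simps)
  qed
  then show ?thesis
    by (simp add: fps_inverse_unique)
qed

locale finite_additive_subgroup =
  fixes V :: "'c::field set"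
  assumes finite_subgroup: "finite V" and zero_closed: "0 \<in> V"
    and add_closed: "v \<in> V \<Longrightarrow> w \<in> V \<Longrightarrow> v + w \<in> V"
    and uminus_closed: "v \<in> V \<Longrightarrow> - v \<in> V"
begin

lemma diff_closed: "v \<in> V \<Longrightarrow> w \<in> V \<Longrightarrow> v - w \<in> V"
  using add_closed[of v "- w"] uminus_closed[of w] by simp

lemma card_pos: "0 < card V"
  using finite_subgroup zero_closed card_gt_0_iff by blast

lemma poly_vanishing_poly_shift:
  assumes "v \<in> V"
  shows "poly (vanishing_poly V) (y + v) = poly (vanishing_poly V) y"
proof -
  have "(\<Prod>w\<in>V. w + (y + v)) = (\<Prod>w\<in>V. w + y)"
    by (rule prod.reindex_bij_witness[of _ "\<lambda>w. w - v" "\<lambda>w. w + v"])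
      (use assms add_closed diff_closed in \<open>auto simp: algebra_simps\<close>)
  then show ?thesis
    by (simp add: poly_vanishing_poly)
qed

lemma poly_vanishing_poly_eq_0: "v \<in> V \<Longrightarrow> poly (vanishing_poly V) v = 0"
  using finite_subgroup uminus_closed by (auto simp: poly_vanishing_poly intro!: prod_zero bexI[of _ "- v"])

lemma vanishing_poly_pcompose_shift:
  "pcompose (vanishing_poly V) [:y, 1:] = vanishing_poly V + [:poly (vanishing_poly V) y:]"
proof (rule poly_eqI_degree_lead_coeff[where n = "card V" and A = V])
  let ?P = "vanishing_poly V"
  have "degree (pcompose ?P [:y, 1:]) = card V"
    by (simp add: degree_pcompose degree_vanishing_poly finite_subgroup)
  then show "coeff (pcompose ?P [:y, 1:]) (card V) = coeff (?P + [:poly ?P y:]) (card V)"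
    using lead_coeff_comp[of "[:y, 1:]" ?P] card_pos zero_closed
    by (auto simp: degree_vanishing_poly finite_subgroup lead_coeff_vanishing_poly coeff_pCons split: nat.split)
  show "degree (pcompose ?P [:y, 1:]) \<le> card V" "degree (?P + [:poly ?P y:]) \<le> card V"
    by (simp_all add: degree_pcompose degree_vanishing_poly finite_subgroup degree_add_le)
  show "poly (pcompose ?P [:y, 1:]) v = poly (?P + [:poly ?P y:]) v" if "v \<in> V" for v
    using poly_vanishing_poly_shift[OF that, of y] poly_vanishing_poly_eq_0[OF that]
    by (simp add: poly_pcompose)
qed simp

lemma pderiv_vanishing_poly:
  "pderiv (vanishing_poly V) = [:poly (pderiv (vanishing_poly V)) 0:]"
proof (rule poly_eqI_degree[where A = V])
  let ?P = "vanishing_poly V"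
  have "pcompose (pderiv ?P) [:y, 1:] = pderiv ?P" for y
    using arg_cong[OF vanishing_poly_pcompose_shift[of y], of pderiv]
    by (simp add: pderiv_pcompose pderiv_add pderiv_pCons)
  from arg_cong[OF this, of "\<lambda>p. poly p 0"]
  show "poly (pderiv ?P) v = poly [:poly (pderiv ?P) 0:] v" for v
    by (simp add: poly_pcompose)
  have "degree (pderiv ?P) \<le> card V - 1"
    using degree_pderiv_le[of ?P] by (simp add: degree_vanishing_poly finite_subgroup)
  then show "degree (pderiv ?P) < card V"
    using card_pos by linarith
qed (use card_pos in simp)

lemma poly_pderiv_vanishing_poly_0: "poly (pderiv (vanishing_poly V)) 0 = (\<Prod>v\<in>V - {0}. v)"
proof -
  have "poly (pderiv (vanishing_poly V)) 0 = (\<Sum>a\<in>V. \<Prod>v\<in>V - {a}. v)"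
    by (simp add: vanishing_poly_def pderiv_prod pderiv_pCons poly_sum poly_prod)
  also have "\<dots> = (\<Prod>v\<in>V - {0}. v) + (\<Sum>a\<in>V - {0}. \<Prod>v\<in>V - {a}. v)"
    using sum.remove[OF finite_subgroup zero_closed] by simp
  also have "(\<Sum>a\<in>V - {0}. \<Prod>v\<in>V - {a}. v) = 0"
    using finite_subgroup zero_closed by (intro sum.neutral ballI prod_zero) auto
  finally show ?thesis
    by simp
qed

lemma fps_vanishing_poly_shift:
  "fps_const (poly (vanishing_poly V) x) + fps_of_poly (vanishing_poly V)
    = (\<Prod>v\<in>V. fps_const (v + x) + fps_X)"
proof -
  have "fps_of_poly (pcompose (vanishing_poly V) [:x, 1:])
      = fps_const (poly (vanishing_poly V) x) + fps_of_poly (vanishing_poly V)"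
    by (simp add: vanishing_poly_pcompose_shift fps_of_poly_add fps_of_poly_const add.commute)
  moreover have "fps_of_poly (pcompose (vanishing_poly V) [:x, 1:]) = (\<Prod>v\<in>V. fps_const (v + x) + fps_X)"
    by (simp add: vanishing_poly_def pcompose_prod pcompose_pCons fps_of_poly_prod fps_of_poly_pCons)
  ultimately show ?thesis
    by simp
qed

text \<open>As formal power series in \<open>X\<close>, \<open>\<Sum>v. 1 / (x + v + X)\<close> is the logarithmic derivative
  \<open>P'(x + X) / P(x + X)\<close> of \<open>P = vanishing_poly V\<close>, and by additivity of \<open>P\<close> the numerator
  \<open>P'\<close> is constant.\<close>
lemma sum_inverse_linear_mult_prod:
  assumes nz: "\<And>v. v \<in> V \<Longrightarrow> x + v \<noteq> 0"
  defines "L \<equiv> \<lambda>v. fps_const (v + x) + fps_X"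
  shows "(\<Sum>v\<in>V. inverse (L v)) * (\<Prod>v\<in>V. L v) = fps_const (poly (pderiv (vanishing_poly V)) 0)"
proof -
  have "inverse (L v) * (\<Prod>w\<in>V. L w) = (\<Prod>w\<in>V - {v}. L w)" if "v \<in> V" for v
  proof -
    have "L v $ 0 \<noteq> 0"
      using nz[OF that] by (simp add: L_def add.commute)
    then show ?thesis
      using prod.remove[OF finite_subgroup that, of L] by (simp add: inverse_mult_eq_1 mult.assoc[symmetric])
  qed
  then have "(\<Sum>v\<in>V. inverse (L v)) * (\<Prod>v\<in>V. L v) = (\<Sum>v\<in>V. \<Prod>w\<in>V - {v}. L w)"
    by (simp add: sum_distrib_right)
  also have "\<dots> = fps_of_poly (pderiv (pcompose (vanishing_poly V) [:x, 1:]))"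
    by (simp add: vanishing_poly_def pcompose_prod pcompose_pCons pderiv_prod pderiv_pCons
        fps_of_poly_sum fps_of_poly_prod fps_of_poly_pCons L_def)
  also have "\<dots> = fps_const (poly (pderiv (vanishing_poly V)) 0)"
    using pderiv_vanishing_poly
    by (simp add: vanishing_poly_pcompose_shift pderiv_add pderiv_pCons fps_of_poly_const)
  finally show ?thesis .
qed

lemma sum_inverse_power_vanishing_poly:
  assumes nz: "\<And>v. v \<in> V \<Longrightarrow> x + v \<noteq> 0"
  defines "P \<equiv> vanishing_poly V"
  shows "(\<Sum>v\<in>V. (-1) ^ n / (x + v) ^ Suc n)
    = poly (pderiv P) 0 * inverse (fps_const (poly P x) + fps_of_poly P) $ n"
proof -
  define L where "L = (\<lambda>v. fps_const (v + x) + fps_X)"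
  have denom: "fps_const (poly P x) + fps_of_poly P = (\<Prod>v\<in>V. L v)"
    unfolding P_def L_def by (rule fps_vanishing_poly_shift)
  have product: "(\<Sum>v\<in>V. inverse (L v)) * (\<Prod>v\<in>V. L v) = fps_const (poly (pderiv P) 0)"
    unfolding P_def L_def by (rule sum_inverse_linear_mult_prod[OF nz])
  have "poly P x \<noteq> 0"
    using nz finite_subgroup by (simp add: P_def poly_vanishing_poly add.commute)
  then have "(\<Prod>v\<in>V. L v) $ 0 \<noteq> 0"
    using poly_vanishing_poly_eq_0[OF zero_closed] by (simp flip: denom add: P_def poly_0_coeff_0)
  then have "(\<Sum>v\<in>V. inverse (L v)) = (\<Sum>v\<in>V. inverse (L v)) * ((\<Prod>v\<in>V. L v) * inverse (\<Prod>v\<in>V. L v))"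
    by (simp add: inverse_mult_eq_1')
  also have "\<dots> = fps_const (poly (pderiv P) 0) * inverse (\<Prod>v\<in>V. L v)"
    by (simp only: mult.assoc[symmetric] product)
  finally have "(\<Sum>v\<in>V. inverse (L v)) = fps_const (poly (pderiv P) 0) * inverse (\<Prod>v\<in>V. L v)" .
  then have "(\<Sum>v\<in>V. inverse (L v) $ n) = poly (pderiv P) 0 * inverse (\<Prod>v\<in>V. L v) $ n"
    by (metis fps_sum_nth fps_mult_left_const_nth)
  moreover have "inverse (L v) $ n = (-1) ^ n / (x + v) ^ Suc n" if "v \<in> V" for v
    using fps_nth_inverse_linear[of "v + x" n] nz[OF that] by (simp add: L_def add.commute)
  ultimately show ?thesis
    by (simp add: denom)
qed

end

context complete_nonarch_field
begin

lemma av_add_le_scaled: "av x * s \<le> B \<Longrightarrow> av y * s \<le> B \<Longrightarrow> 0 \<le> s \<Longrightarrow> av (x + y) * s \<le> B"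
  using mult_right_mono[OF av_add_le_max[of x y], of s] by (auto simp: max_def split: if_splits)

lemma av_coeff_prod_linear_le:
  assumes "finite S" and "0 \<le> \<sigma>"
  shows "av (coeff (\<Prod>v\<in>S. [:v, 1:]) k) * \<sigma> ^ k \<le> (\<Prod>v\<in>S. max \<sigma> (av v))"
  using assms(1)
proof (induction S arbitrary: k rule: finite_induct)
  case empty
  then show ?case
    by (cases k) auto
next
  case (insert a S)
  let ?Q = "\<Prod>v\<in>S. [:v, 1:]" and ?G = "\<Prod>v\<in>S. max \<sigma> (av v)"
  have "0 \<le> ?G"
    using assms(2) by (intro prod_nonneg) (auto simp: max_def av_nonneg)
  have "av (a * coeff ?Q k) * \<sigma> ^ k \<le> max \<sigma> (av a) * ?G"
    using insert.IH[of k] \<open>0 \<le> ?G\<close> assms(2) av_nonneg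
    by (simp add: mult.assoc) (intro mult_mono, auto)
  moreover have "av (coeff (pCons 0 ?Q) k) * \<sigma> ^ k \<le> max \<sigma> (av a) * ?G"
  proof (cases k)
    case (Suc j)
    have "av (coeff ?Q j) * \<sigma> ^ j * \<sigma> \<le> ?G * max \<sigma> (av a)"
      using insert.IH[of j] \<open>0 \<le> ?G\<close> assms(2) by (intro mult_mono) auto
    then show ?thesis
      using Suc by (simp add: mult_ac)
  qed (use \<open>0 \<le> ?G\<close> assms(2) in simp)
  ultimately have "av (a * coeff ?Q k + coeff (pCons 0 ?Q) k) * \<sigma> ^ k \<le> max \<sigma> (av a) * ?G"
    using assms(2) by (intro av_add_le_scaled) auto
  moreover have "coeff (\<Prod>v\<in>insert a S. [:v, 1:]) k = a * coeff ?Q k + coeff (pCons 0 ?Q) k"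
    using insert by simp
  ultimately show ?case
    using insert by simp
qed

text \<open>Induction on \<open>n\<close>: the coefficients of \<open>W = 1 / (u + R)\<close> satisfy
  \<open>W n * u = - (\<Sum>i<n. W i * R (n - i))\<close>.\<close>
lemma av_fps_inverse_nth_le:
  assumes u: "u \<noteq> 0" and R0: "R $ 0 = 0" and R: "\<And>k. av (R $ k) * \<sigma> ^ k \<le> av u" and "0 < \<sigma>"
  shows "av (inverse (fps_const u + R) $ n) * \<sigma> ^ n \<le> inverse (av u)"
proof (induction n rule: less_induct)
  case (less n)
  define W where "W = inverse (fps_const u + R)"
  have "W * (fps_const u + R) = 1"
    using u R0 by (simp add: W_def inverse_mult_eq_1)
  show ?case
  proof (cases n)
    case (Suc m)
    have "0 = (W * (fps_const u + R)) $ n"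
      using \<open>W * (fps_const u + R) = 1\<close> Suc by simp
    also have "\<dots> = W $ n * u + (W * R) $ n"
      by (simp add: distrib_left)
    also have "(W * R) $ n = (\<Sum>i<n. W $ i * R $ (n - i))"
      using R0 by (simp add: fps_mult_nth atLeast0AtMost lessThan_Suc_atMost[symmetric])
    finally have Wn: "W $ n * u = - (\<Sum>i<n. W $ i * R $ (n - i))"
      by (simp add: eq_neg_iff_add_eq_0)
    have "av (W $ i * R $ (n - i)) \<le> inverse (\<sigma> ^ n)" if "i < n" for i
    proof -
      have "av (W $ i * R $ (n - i)) * \<sigma> ^ n = (av (W $ i) * \<sigma> ^ i) * (av (R $ (n - i)) * \<sigma> ^ (n - i))"
        using that by (simp add: power_add[symmetric] mult_ac)
      also have "\<dots> \<le> inverse (av u) * av u"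
        using less.IH[OF that] R[of "n - i"] \<open>0 < \<sigma>\<close> av_nonneg by (intro mult_mono) (auto simp: W_def)
      finally show ?thesis
        using u \<open>0 < \<sigma>\<close> by (simp add: field_simps)
    qed
    then have "av (W $ n * u) \<le> inverse (\<sigma> ^ n)"
      unfolding Wn av_minus using \<open>0 < \<sigma>\<close> by (intro av_sum_le) auto
    then show ?thesis
      using av_pos[OF u] \<open>0 < \<sigma>\<close> by (simp add: W_def field_simps)
  qed (use R0 u in simp)
qed

context
  fixes V :: "'c set" and x :: 'c
  assumes V: "finite_additive_subgroup V"
    and nearest: "\<And>v. v \<in> V \<Longrightarrow> av x \<le> av (x + v)"
begin

interpretation finite_additive_subgroup V
  by (rule V)

lemma av_le_av_add_nearest: "v \<in> V \<Longrightarrow> av v \<le> av (x + v)"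
  using av_add_eq_right[of x v] nearest[of v] by (cases "av x < av v") auto

lemma av_poly_vanishing_poly_nearest: "av (poly (vanishing_poly V) x) = (\<Prod>v\<in>V. av (x + v))"
  by (simp add: poly_vanishing_poly av_prod add.commute)

lemma av_coeff_vanishing_poly_le:
  assumes "0 \<le> \<sigma>" "\<sigma> \<le> av x"
  shows "av (coeff (vanishing_poly V) k) * \<sigma> ^ k \<le> av (poly (vanishing_poly V) x)"
proof -
  have "av (coeff (vanishing_poly V) k) * \<sigma> ^ k \<le> (\<Prod>v\<in>V. max \<sigma> (av v))"
    unfolding vanishing_poly_def using finite_subgroup assms(1) by (rule av_coeff_prod_linear_le)
  also have "\<dots> \<le> (\<Prod>v\<in>V. av (x + v))"
    using assms nearest av_le_av_add_nearest by (intro prod_mono) (auto intro: order_trans)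
  finally show ?thesis
    by (simp add: av_poly_vanishing_poly_nearest)
qed

lemma av_prod_nonzero_le:
  assumes "1 \<in> V"
  shows "av (\<Prod>v\<in>V - {0}. v) * av x ^ 2 \<le> av (poly (vanishing_poly V) x)"
proof -
  let ?V' = "V - {0} - {1}"
  have "1 \<in> V - {0}"
    using assms by simp
  have "av (\<Prod>v\<in>V - {0}. v) = (\<Prod>v\<in>?V'. av v)"
    using prod.remove[OF _ \<open>1 \<in> V - {0}\<close>, of av] finite_subgroup by (simp add: av_prod)
  moreover have "av (poly (vanishing_poly V) x) = av x * av (x + 1) * (\<Prod>v\<in>?V'. av (x + v))"
    using prod.remove[OF finite_subgroup zero_closed, of "\<lambda>v. av (x + v)"]
      prod.remove[OF _ \<open>1 \<in> V - {0}\<close>, of "\<lambda>v. av (x + v)"] finite_subgroup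
    by (simp add: av_poly_vanishing_poly_nearest mult.assoc)
  moreover have "av x * av x * (\<Prod>v\<in>?V'. av v) \<le> av x * av (x + 1) * (\<Prod>v\<in>?V'. av (x + v))"
  proof (rule mult_mono)
    show "av x * av x \<le> av x * av (x + 1)"
      using nearest[OF assms] av_nonneg by (rule mult_left_mono)
    show "(\<Prod>v\<in>?V'. av v) \<le> (\<Prod>v\<in>?V'. av (x + v))"
      using av_le_av_add_nearest av_nonneg by (intro prod_mono) auto
  qed (simp_all add: av_nonneg prod_nonneg)
  ultimately show ?thesis
    by (simp add: power2_eq_square mult_ac)
qed

lemma av_sum_inverse_power_le:
  assumes "1 \<in> V" and "0 < \<sigma>" "\<sigma> \<le> av x"
  shows "av (\<Sum>v\<in>V. inverse ((x + v) ^ Suc n)) * \<sigma> ^ n \<le> inverse (av x ^ 2)"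
proof -
  let ?P = "vanishing_poly V"
  let ?u = "poly ?P x" and ?\<gamma> = "poly (pderiv ?P) 0"
  let ?W = "inverse (fps_const ?u + fps_of_poly ?P)"
  have "0 < av x"
    using assms by simp
  then have nz: "x + v \<noteq> 0" if "v \<in> V" for v
    using nearest[OF that] by auto
  then have "?u \<noteq> 0"
    using finite_subgroup by (simp add: poly_vanishing_poly add.commute)
  have "(\<Sum>v\<in>V. inverse ((x + v) ^ Suc n)) = (-1) ^ n * (\<Sum>v\<in>V. (-1) ^ n / (x + v) ^ Suc n)"
    by (simp add: sum_distrib_left divide_inverse mult.assoc[symmetric] power_mult_distrib[symmetric])
  also have "\<dots> = (-1) ^ n * (?\<gamma> * ?W $ n)"
    by (subst sum_inverse_power_vanishing_poly[OF nz]) simp_all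
  finally have "av (\<Sum>v\<in>V. inverse ((x + v) ^ Suc n)) = av ?\<gamma> * av (?W $ n)"
    by simp
  moreover have "av (?W $ n) * \<sigma> ^ n \<le> inverse (av ?u)"
  proof (rule av_fps_inverse_nth_le[OF \<open>?u \<noteq> 0\<close> _ _ \<open>0 < \<sigma>\<close>])
    show "fps_of_poly ?P $ 0 = 0"
      using poly_vanishing_poly_eq_0[OF zero_closed] by (simp add: poly_0_coeff_0)
    show "av (fps_of_poly ?P $ k) * \<sigma> ^ k \<le> av ?u" for k
      using av_coeff_vanishing_poly_le assms by simp
  qed
  moreover have \<gamma>: "av ?\<gamma> * av x ^ 2 \<le> av ?u"
    using av_prod_nonzero_le[OF assms(1)] by (simp add: poly_pderiv_vanishing_poly_0)
  ultimately have "av (\<Sum>v\<in>V. inverse ((x + v) ^ Suc n)) * \<sigma> ^ n \<le> av ?\<gamma> * inverse (av ?u)"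
    using av_nonneg[of ?\<gamma>] by (simp add: mult.assoc mult_left_mono)
  also have "\<dots> \<le> inverse (av x ^ 2)"
  proof -
    have "av ?\<gamma> \<le> av ?u / av x ^ 2"
      using \<open>0 < av x\<close> \<gamma> by (intro mult_imp_le_div_pos) auto
    then have "av ?\<gamma> * inverse (av ?u) \<le> av ?u / av x ^ 2 * inverse (av ?u)"
      by (rule mult_right_mono) (simp add: av_nonneg)
    then show ?thesis
      using \<open>?u \<noteq> 0\<close> by (simp add: inverse_eq_divide)
  qed
  finally show ?thesis .
qed

end

end

section \<open>Polynomials in T as Laurent series in 1/T\<close>

lemma polyK_nth: "polyK a $$ n = (if n \<le> 0 then coeff a (nat (- n)) else 0)"
proof (induction a arbitrary: n rule: pCons_induct)
  case 0
  then show ?case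
    by (simp add: polyK_def)
next
  case (pCons c p)
  have "polyK (pCons c p) $$ n = (if n = 0 then c else 0) + polyK p $$ (n + 1)"
    by (simp add: polyK_def map_poly_pCons fls_X_inv_times_conv_shift)
  also have "\<dots> = (if n \<le> 0 then coeff (pCons c p) (nat (- n)) else 0)"
  proof -
    have "n < 0 \<Longrightarrow> nat (- n) = Suc (nat (- (n + 1)))"
      by simp
    then show ?thesis
      using pCons.IH[of "n + 1"] by (cases n "0 :: int" rule: linorder_cases) (simp_all add: coeff_pCons)
  qed
  finally show ?case .
qed

lemma polyK_add: "polyK (a + b) = polyK a + polyK b"
  by (rule fls_eqI) (simp add: polyK_nth)

lemma polyK_minus: "polyK (- a) = - polyK a"
  by (rule fls_eqI) (simp add: polyK_nth)

lemma polyK_0 [simp]: "polyK 0 = 0"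
  by (simp add: polyK_def)

lemma polyK_1 [simp]: "polyK 1 = 1"
  by (rule fls_eqI) (simp add: polyK_nth)

lemma polyK_eq_0_iff [simp]: "polyK a = 0 \<longleftrightarrow> a = 0"
proof
  assume "polyK a = 0"
  then have "coeff a i = 0" for i
    using polyK_nth[of a "- int i"] by simp
  then show "a = 0"
    by (simp add: poly_eq_iff)
qed simp

lemma polyK_inj: "polyK a = polyK b \<Longrightarrow> a = b"
  using polyK_add[of a "- b"] polyK_minus[of b] polyK_eq_0_iff[of "a - b"] by simp

lemma fls_subdegree_polyK: "a \<noteq> 0 \<Longrightarrow> fls_subdegree (polyK a) = - int (degree a)"
proof (rule antisym)
  assume "a \<noteq> 0"
  then show "fls_subdegree (polyK a) \<le> - int (degree a)"
    by (intro fls_subdegree_leI) (simp add: polyK_nth)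
  show "- int (degree a) \<le> fls_subdegree (polyK a)"
    using \<open>a \<noteq> 0\<close> by (intro fls_subdegree_geI) (auto simp: polyK_nth coeff_eq_0)
qed

definition polys_deg_less :: "nat \<Rightarrow> 'k::zero poly set" where
  "polys_deg_less M = {b. degree b < M}"

definition monics_deg_less :: "nat \<Rightarrow> 'k::{zero,one} poly set" where
  "monics_deg_less N = {a. lead_coeff a = 1 \<and> degree a < N}"

lemma monics_deg_less_nonzero:
  fixes a :: "'k::zero_neq_one poly"
  shows "a \<in> monics_deg_less N \<Longrightarrow> a \<noteq> 0"
  by (auto simp: monics_deg_less_def)

lemma finite_polys_deg_less: "finite (polys_deg_less M :: 'k::{finite,zero} poly set)"
proof -
  let ?f = "\<lambda>b::'k poly. map (coeff b) [0..<M]"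
  have "inj_on ?f (polys_deg_less M)"
  proof (rule inj_onI)
    fix a b
    assume "a \<in> polys_deg_less M" "b \<in> polys_deg_less M" "?f a = ?f b"
    then have "coeff a i = coeff b i" for i
      by (cases "i < M") (auto simp: polys_deg_less_def coeff_eq_0)
    then show "a = b"
      by (simp add: poly_eq_iff)
  qed
  moreover have "?f ` polys_deg_less M \<subseteq> {xs. set xs \<subseteq> UNIV \<and> length xs = M}"
    by auto
  then have "finite (?f ` polys_deg_less M)"
    by (rule finite_subset) (rule finite_lists_length_eq, simp)
  ultimately show ?thesis
    by (rule finite_imageD[rotated])
qed

lemma finite_monics_deg_less: "finite (monics_deg_less N :: 'k::{finite,zero,one} poly set)"
  by (rule finite_subset[OF _ finite_polys_deg_less[of N]]) (auto simp: monics_deg_less_def polys_deg_less_def)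

lemma polys_deg_less_mono: "M \<le> M' \<Longrightarrow> polys_deg_less M \<subseteq> polys_deg_less M'"
  by (auto simp: polys_deg_less_def)

lemma monics_deg_less_mono: "N \<le> N' \<Longrightarrow> monics_deg_less N \<subseteq> monics_deg_less N'"
  by (auto simp: monics_deg_less_def)

lemma finite_additive_subgroup_image_polys_deg_less:
  fixes h :: "'k::{finite,field} poly \<Rightarrow> 'c::field"
  assumes "\<And>a b. h (a + b) = h a + h b" and "0 < M"
  shows "finite_additive_subgroup (h ` polys_deg_less M)"
proof
  have h0: "h 0 = 0"
    using assms(1)[of 0 0] by (simp only: add_0_left add_cancel_right_right)
  have hminus: "h (- a) = - h a" for a
    using assms(1)[of a "- a"] h0 by (simp add: minus_unique)
  show "finite (h ` polys_deg_less M)"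
    by (intro finite_imageI finite_polys_deg_less)
  show "0 \<in> h ` polys_deg_less M"
    using assms(2) h0 by (intro image_eqI[of _ _ 0]) (auto simp: polys_deg_less_def)
  show "v + w \<in> h ` polys_deg_less M" if vw: "v \<in> h ` polys_deg_less M" "w \<in> h ` polys_deg_less M" for v w
  proof -
    obtain a b where "v = h a" "a \<in> polys_deg_less M" "w = h b" "b \<in> polys_deg_less M"
      using vw by (elim imageE)
    then show ?thesis
      using degree_add_le_max[of a b] by (intro image_eqI[of _ _ "a + b"]) (auto simp: polys_deg_less_def assms(1))
  qed
  show "- v \<in> h ` polys_deg_less M" if "v \<in> h ` polys_deg_less M" for v
    using that by (auto simp: polys_deg_less_def hminus[symmetric])
qed

lemma bij_betw_add_polys_deg_less:
  fixes b0 :: "'k::ab_group_add poly"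
  shows "degree b0 < M \<Longrightarrow> bij_betw (\<lambda>b. b0 + b) (polys_deg_less M) (polys_deg_less M)"
  by (rule bij_betwI[where g = "\<lambda>b. b - b0"])
    (auto simp: polys_deg_less_def intro: le_less_trans[OF degree_add_le_max] le_less_trans[OF degree_diff_le_max])

section \<open>Embeddings of the Laurent series field\<close>

locale Kinf_embedding = complete_nonarch_field av for av :: "'c::field \<Rightarrow> real" +
  fixes \<iota> :: "'k::{finite,field} fls \<Rightarrow> 'c"
  assumes iota_add: "\<iota> (f + g) = \<iota> f + \<iota> g" and iota_mult: "\<iota> (f * g) = \<iota> f * \<iota> g"
    and iota_1: "\<iota> 1 = 1"
    and av_iota: "f \<noteq> 0 \<Longrightarrow> av (\<iota> f) = real CARD('k) powr (- real_of_int (fls_subdegree f))"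
begin

lemma card_ge_2: "2 \<le> real CARD('k)"
proof -
  have "card {0::'k, 1} \<le> CARD('k)"
    by (rule card_mono) auto
  then show ?thesis
    by simp
qed

lemma iota_0 [simp]: "\<iota> 0 = 0"
  using iota_add[of 0 0] by (simp only: add_0_left add_cancel_right_right)

lemma iota_minus: "\<iota> (- f) = - \<iota> f"
  using iota_add[of f "- f"] by (simp add: eq_neg_iff_add_eq_0 add.commute)

lemma iota_diff: "\<iota> (f - g) = \<iota> f - \<iota> g"
  using iota_add[of f "- g"] iota_minus[of g] by simp

lemma iota_eq_0_iff [simp]: "\<iota> f = 0 \<longleftrightarrow> f = 0"
  using av_iota[of f] card_ge_2 by (cases "f = 0") auto

lemma iota_inj: "\<iota> f = \<iota> g \<Longrightarrow> f = g"
  using iota_diff[of f g] by simp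

lemma iota_inverse: "\<iota> (inverse f) = inverse (\<iota> f)"
proof (cases "f = 0")
  case False
  then have "\<iota> f * \<iota> (inverse f) = 1"
    using iota_mult[of f "inverse f"] iota_1 by simp
  then show ?thesis
    by (metis inverse_unique)
qed simp

lemma iota_divide: "\<iota> (f / g) = \<iota> f / \<iota> g"
  by (simp add: divide_inverse iota_mult iota_inverse)

lemma iota_of_nat: "\<iota> (of_nat n) = of_nat n"
  by (induction n) (simp_all add: iota_add iota_1)

lemma CHAR_eq: "CHAR('c) = CHAR('k)"
proof (rule CHAR_eqI)
  have "(of_nat CHAR('k) :: 'k fls) = 0"
    by (simp add: fls_of_nat)
  then show "of_nat CHAR('k) = (0::'c)"
    using iota_of_nat[of "CHAR('k)"] by simp
  fix n
  assume "of_nat n = (0::'c)"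
  then have "(of_nat n :: 'k fls) = 0"
    using iota_of_nat[of n] by (metis iota_eq_0_iff)
  then show "CHAR('k) dvd n"
    by (simp add: fls_of_nat of_nat_eq_0_iff_char_dvd)
qed

lemma prime_CHAR: "prime CHAR('c)"
  unfolding CHAR_eq by (rule prime_CHAR_semidom) (simp add: finite_imp_CHAR_pos)

lemma LIMSEQ_inverse_card_power: "(\<lambda>n. inverse (real CARD('k) ^ n)) \<longlonglongrightarrow> 0"
  using card_ge_2 by (intro LIMSEQ_inverse_realpow_zero) simp

lemma av_iota_fls_X: "av (\<iota> fls_X) = inverse (real CARD('k))"
  using av_iota[of fls_X] card_ge_2 by (simp add: powr_minus)

lemma av_iota_less_imp_nth_eq_0:
  assumes "av (\<iota> g) < inverse (real CARD('k) ^ k)" and "j \<le> int k"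
  shows "g $$ j = 0"
proof (cases "g = 0")
  case False
  then have "real CARD('k) powr (- real_of_int (fls_subdegree g)) < real CARD('k) powr (- real k)"
    using assms(1) av_iota card_ge_2 by (simp add: powr_minus powr_realpow)
  then have "j < fls_subdegree g"
    using card_ge_2 assms(2) by simp
  then show ?thesis
    by simp
qed simp

lemma av_iota_le:
  assumes "\<And>j. j \<le> int n \<Longrightarrow> g $$ j = 0"
  shows "av (\<iota> g) \<le> inverse (real CARD('k) ^ n)"
proof (cases "g = 0")
  case False
  then have "int n < fls_subdegree g"
    using assms[of "fls_subdegree g"] by (cases "int n < fls_subdegree g") auto
  then have "real CARD('k) powr (- real_of_int (fls_subdegree g)) \<le> real CARD('k) powr (- real n)"
    using card_ge_2 by (intro powr_mono) auto
  then show ?thesis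
    using av_iota[OF False] card_ge_2 by (simp add: powr_minus powr_realpow)
qed simp

text \<open>\<open>\<iota>\<close> has closed range, since \<open>K\<^sub>\<infinity>\<close> is complete: a limit of the \<open>\<iota> (F n)\<close>
  is the image of the Laurent series assembled from the eventually stable coefficients.\<close>
lemma mem_range_iota_of_approx:
  assumes F: "\<And>n. av (z - \<iota> (F n)) < inverse (real CARD('k) ^ n)"
  shows "z \<in> range \<iota>"
proof -
  have agree: "F m $$ j = F n $$ j" if "k \<le> m" "k \<le> n" "j \<le> int k" for m n k j
  proof -
    have "inverse (real CARD('k) ^ m) \<le> inverse (real CARD('k) ^ k)"
      "inverse (real CARD('k) ^ n) \<le> inverse (real CARD('k) ^ k)"
      using that card_ge_2 by (auto intro!: le_imp_inverse_le power_increasing)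
    then have "av (z - \<iota> (F n)) < inverse (real CARD('k) ^ k)" "av (z - \<iota> (F m)) < inverse (real CARD('k) ^ k)"
      using F[of m] F[of n] by (meson order_less_le_trans)+
    from av_diff_less[OF this]
    have "av (\<iota> (F m - F n)) < inverse (real CARD('k) ^ k)"
      by (simp add: iota_diff)
    then have "(F m - F n) $$ j = 0"
      using that(3) by (rule av_iota_less_imp_nth_eq_0)
    then show ?thesis
      by simp
  qed
  define G where "G = Abs_fls (\<lambda>j. F (nat j) $$ j)"
  have G: "G $$ j = F (nat j) $$ j" for j
    unfolding G_def by (rule nth_Abs_fls_lower_bound[of "min 0 (fls_subdegree (F 0))"]) auto
  have "av (z - \<iota> G) \<le> inverse (real CARD('k) ^ n)" for n
  proof -
    have "(G - F n) $$ j = 0" if "j \<le> int n" for j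
      using agree[of "nat j" "nat j" n j] that by (simp add: G)
    then have "av (\<iota> (G - F n)) \<le> inverse (real CARD('k) ^ n)"
      by (rule av_iota_le)
    moreover have "z - \<iota> G = (z - \<iota> (F n)) - \<iota> (G - F n)"
      by (simp add: iota_diff)
    ultimately show ?thesis
      using F[of n] by (metis av_diff_le less_imp_le)
  qed
  with LIMSEQ_inverse_card_power have "av (z - \<iota> G) \<le> 0"
    by (intro LIMSEQ_le_const) auto
  then have "z = \<iota> G"
    using av_nonneg[of "z - \<iota> G"] by simp
  then show ?thesis
    by simp
qed

lemma Omega_dist_pos:
  assumes "z \<notin> range \<iota>"
  shows "\<exists>\<delta>>0. \<delta> \<le> 1 \<and> (\<forall>f. \<delta> \<le> av (z - \<iota> f))"
proof (rule ccontr)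
  assume "\<not> ?thesis"
  then have close: "\<exists>f. av (z - \<iota> f) < \<delta>" if "0 < \<delta>" "\<delta> \<le> 1" for \<delta>
    using that by (auto simp: not_le)
  have "\<exists>f. av (z - \<iota> f) < inverse (real CARD('k) ^ n)" for n
    using card_ge_2 by (intro close) (auto simp: inverse_le_1_iff)
  then obtain F where "\<And>n. av (z - \<iota> (F n)) < inverse (real CARD('k) ^ n)"
    by metis
  then show False
    using assms mem_range_iota_of_approx by blast
qed

abbreviation embA :: "'k poly \<Rightarrow> 'c" where
  "embA a \<equiv> \<iota> (polyK a)"

lemma embA_add: "embA (a + b) = embA a + embA b"
  by (simp add: polyK_add iota_add)

lemma embA_1: "embA 1 = 1"
  by (simp add: iota_1)

lemma inj_embA: "inj embA"
  by (auto intro: injI iota_inj polyK_inj)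

lemma sum_polys_deg_less_shift:
  assumes "degree b0 < M"
  shows "(\<Sum>b\<in>polys_deg_less M. g (embA b)) = (\<Sum>v\<in>embA ` polys_deg_less M. g (embA b0 + v))"
proof -
  have "(\<Sum>b\<in>polys_deg_less M. g (embA b)) = (\<Sum>b\<in>polys_deg_less M. g (embA (b0 + b)))"
    by (rule sum.reindex_bij_betw[OF bij_betw_add_polys_deg_less[OF assms], of "\<lambda>b. g (embA b)", symmetric])
  also have "\<dots> = (\<Sum>v\<in>embA ` polys_deg_less M. g (embA b0 + v))"
    by (simp add: sum.reindex inj_on_subset[OF inj_embA] embA_add)
  finally show ?thesis .
qed

lemma av_embA: "a \<noteq> 0 \<Longrightarrow> av (embA a) = real CARD('k) ^ degree a"
  using av_iota[of "polyK a"] fls_subdegree_polyK[of a] card_ge_2 by (simp add: powr_realpow)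

lemma exists_nearest_embA: "\<exists>b0. \<forall>b. av (x + embA b0) \<le> av (x + embA b)"
proof -
  obtain K where K: "av x < real CARD('k) ^ K"
    using real_arch_pow[of "real CARD('k)" "av x"] card_ge_2 by auto
  let ?S = "polys_deg_less (Suc K) :: 'k poly set" and ?g = "\<lambda>b. av (x + embA b)"
  have "finite (?g ` ?S)"
    by (intro finite_imageI finite_polys_deg_less)
  have "0 \<in> ?S"
    by (simp add: polys_deg_less_def)
  then have "Min (?g ` ?S) \<in> ?g ` ?S"
    using \<open>finite (?g ` ?S)\<close> by (intro Min_in) auto
  then obtain b0 where b0: "Min (?g ` ?S) = ?g b0" "b0 \<in> ?S"
    by (rule imageE)
  have "?g b0 \<le> ?g b" for b
  proof (cases "b \<in> ?S")
    case True
    then show ?thesis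
      using b0 Min_le[OF \<open>finite (?g ` ?S)\<close> imageI[OF True]] by simp
  next
    case False
    then have "b \<noteq> 0" "real CARD('k) ^ K \<le> real CARD('k) ^ degree b"
      using card_ge_2 by (auto simp: polys_deg_less_def intro!: power_increasing)
    then have "av x < av (embA b)"
      using K av_embA by simp
    then have "?g b = av (embA b)"
      by (rule av_add_eq_right)
    moreover have "?g b0 \<le> ?g 0"
      using b0 Min_le[OF \<open>finite (?g ` ?S)\<close> imageI[OF \<open>0 \<in> ?S\<close>]] by simp
    ultimately show ?thesis
      using \<open>av x < av (embA b)\<close> by simp
  qed
  then show ?thesis
    by blast
qed

lemma av_embA_mult_add_ge:
  assumes "\<forall>f. \<delta> \<le> av (z - \<iota> f)" and "a \<noteq> 0"
  shows "av (embA a) * \<delta> \<le> av (embA a * z + embA b)"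
proof -
  have "embA a * z + embA b = embA a * (z - \<iota> (- polyK b / polyK a))"
    using assms(2) by (simp add: iota_divide iota_minus field_simps)
  then show ?thesis
    using assms(1) av_nonneg[of "embA a"] by (simp add: mult_left_mono)
qed

end

section \<open>Expansion of the Eisenstein series at a point of Omega\<close>

locale Omega_point = Kinf_embedding av \<iota> for av :: "'c::field \<Rightarrow> real" and \<iota> :: "'k::{finite,field} fls \<Rightarrow> 'c" +
  fixes z :: 'c and \<delta> :: real
  assumes dist_ge: "\<forall>f. \<delta> \<le> av (z - \<iota> f)" and \<delta>_pos: "0 < \<delta>" and \<delta>_le_1: "\<delta> \<le> 1"
begin

text \<open>\<open>eis_term a b n\<close> is the \<open>n\<close>-th Taylor coefficient at \<open>z\<close> of \<open>w \<mapsto> a / (a w + b)\<close>.\<close>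
definition eis_term :: "'k poly \<Rightarrow> 'k poly \<Rightarrow> nat \<Rightarrow> 'c" where
  "eis_term a b n = embA a * (- embA a) ^ n / (embA a * z + embA b) ^ Suc n"

definition eis_inner :: "'k poly \<Rightarrow> nat \<Rightarrow> 'c" where
  "eis_inner a n = av_lim av (\<lambda>M. \<Sum>b\<in>polys_deg_less M. eis_term a b n)"

definition eis_coeff :: "nat \<Rightarrow> 'c" where
  "eis_coeff n = av_lim av (\<lambda>N. \<Sum>a\<in>monics_deg_less N. eis_inner a n)"

lemma eis_term_le_tail:
  assumes "a \<noteq> 0"
  obtains K where "\<And>N b n. K \<le> N \<Longrightarrow> b \<notin> polys_deg_less N \<Longrightarrow>
    av (eis_term a b n) \<le> av (embA a) * inverse (real CARD('k) ^ N)"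
proof -
  let ?A = "av (embA a)"
  have "0 < ?A"
    using assms by (simp add: av_pos)
  obtain K where K: "av (embA a * z) + ?A < real CARD('k) ^ K"
    using real_arch_pow[of "real CARD('k)" "av (embA a * z) + ?A"] card_ge_2 by auto
  have "av (eis_term a b n) \<le> ?A * inverse (real CARD('k) ^ N)"
    if "Suc K \<le> N" "b \<notin> polys_deg_less N" for N b n
  proof -
    have "b \<noteq> 0" "real CARD('k) ^ N \<le> real CARD('k) ^ degree b"
      using that card_ge_2 by (auto simp: polys_deg_less_def intro!: power_increasing)
    moreover have "real CARD('k) ^ K \<le> real CARD('k) ^ N"
      using that card_ge_2 by (intro power_increasing) auto
    ultimately have b: "real CARD('k) ^ N \<le> av (embA b)" "av (embA a * z) + ?A < av (embA b)"
      using K av_embA by auto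
    then have "av (embA a * z + embA b) = av (embA b)"
      using \<open>0 < ?A\<close> by (intro av_add_eq_right) auto
    then have "av (eis_term a b n) = (?A / av (embA b)) ^ Suc n"
      by (simp add: eis_term_def power_divide)
    also have "\<dots> \<le> (?A / av (embA b)) ^ 1"
      using b \<open>0 < ?A\<close> av_nonneg[of "embA a * z"] by (intro power_decreasing) auto
    also have "\<dots> \<le> ?A * inverse (real CARD('k) ^ N)"
      using b \<open>0 < ?A\<close> card_ge_2 by (simp add: divide_inverse le_imp_inverse_le)
    finally show ?thesis .
  qed
  then show ?thesis
    using that by blast
qed

lemma eis_inner_conv:
  assumes "a \<noteq> 0"
  obtains M1 where "\<And>n. av_conv av (\<lambda>M. \<Sum>b\<in>polys_deg_less M. eis_term a b n) (eis_inner a n)"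
    and "\<And>n M. M1 \<le> M \<Longrightarrow>
      av (eis_inner a n - (\<Sum>b\<in>polys_deg_less M. eis_term a b n)) \<le> av (embA a) * inverse (real CARD('k) ^ M)"
proof -
  obtain K where K: "\<And>N b n. K \<le> N \<Longrightarrow> b \<notin> polys_deg_less N \<Longrightarrow>
      av (eis_term a b n) \<le> av (embA a) * inverse (real CARD('k) ^ N)"
    using eis_term_le_tail[OF assms] by blast
  have "av_conv av (\<lambda>M. \<Sum>b\<in>polys_deg_less M. eis_term a b n) (eis_inner a n) \<and>
      (\<forall>M\<ge>K. av (eis_inner a n - (\<Sum>b\<in>polys_deg_less M. eis_term a b n))
        \<le> av (embA a) * inverse (real CARD('k) ^ M))" for n
  proof -
    have "\<exists>L. av_conv av (\<lambda>M. \<Sum>b\<in>polys_deg_less M. eis_term a b n) L \<and>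
        (\<forall>M\<ge>K. av (L - (\<Sum>b\<in>polys_deg_less M. eis_term a b n)) \<le> av (embA a) * inverse (real CARD('k) ^ M))"
    proof (rule av_conv_of_tail_bound)
      fix N m
      assume "K \<le> N" "N \<le> m"
      then have "(\<Sum>b\<in>polys_deg_less m. eis_term a b n) - (\<Sum>b\<in>polys_deg_less N. eis_term a b n)
          = (\<Sum>b\<in>polys_deg_less m - polys_deg_less N. eis_term a b n)"
        by (simp add: sum_diff finite_polys_deg_less polys_deg_less_mono)
      then show "av ((\<Sum>b\<in>polys_deg_less m. eis_term a b n) - (\<Sum>b\<in>polys_deg_less N. eis_term a b n))
          \<le> av (embA a) * inverse (real CARD('k) ^ N)"
        using K[OF \<open>K \<le> N\<close>] by (auto intro!: av_sum_le simp: av_nonneg)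
    next
      show "(\<lambda>M. av (embA a) * inverse (real CARD('k) ^ M)) \<longlonglongrightarrow> 0"
        by (rule tendsto_mult_right_zero[OF LIMSEQ_inverse_card_power])
    qed
    then show ?thesis
      by (auto simp: eis_inner_def av_lim_eqI)
  qed
  then show ?thesis
    using that by blast
qed

lemma sum_eis_term_le_nearest:
  assumes "a \<noteq> 0" and "degree b0 < M"
    and nearest: "\<And>b. av (embA a * z + embA b0) \<le> av (embA a * z + embA b)"
  shows "av (\<Sum>b\<in>polys_deg_less M. eis_term a b n) * \<delta> ^ n \<le> inverse (av (embA a) * \<delta> ^ 2)"
proof -
  let ?x = "embA a * z" and ?A = "av (embA a)" and ?V = "embA ` polys_deg_less M"
  let ?x' = "?x + embA b0" and ?\<sigma> = "?A * \<delta>"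
  have "0 < ?A"
    using assms(1) by (simp add: av_pos)
  then have "0 < ?\<sigma>"
    using \<delta>_pos by simp
  have "?\<sigma> \<le> av ?x'"
    using av_embA_mult_add_ge[OF dist_ge assms(1)] .
  have V: "finite_additive_subgroup ?V"
    using assms(2) by (intro finite_additive_subgroup_image_polys_deg_less embA_add) simp
  have "1 \<in> ?V"
    using assms(2) embA_1 by (intro image_eqI[of _ _ 1]) (auto simp: polys_deg_less_def)
  have nearest_V: "av ?x' \<le> av (?x' + v)" if "v \<in> ?V" for v
  proof -
    obtain b where "v = embA b"
      using \<open>v \<in> ?V\<close> by blast
    then show ?thesis
      using nearest[of "b0 + b"] by (simp add: embA_add add.assoc)
  qed
  have "av (\<Sum>v\<in>?V. inverse ((?x' + v) ^ Suc n)) * ?\<sigma> ^ n \<le> inverse (av ?x' ^ 2)"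
    by (rule av_sum_inverse_power_le[OF V nearest_V \<open>1 \<in> ?V\<close> \<open>0 < ?\<sigma>\<close> \<open>?\<sigma> \<le> av ?x'\<close>])
  also have "\<dots> \<le> inverse (?\<sigma> ^ 2)"
    using \<open>?\<sigma> \<le> av ?x'\<close> \<open>0 < ?\<sigma>\<close> by (intro le_imp_inverse_le power_mono) auto
  finally have est: "av (\<Sum>v\<in>?V. inverse ((?x' + v) ^ Suc n)) * ?\<sigma> ^ n \<le> inverse (?\<sigma> ^ 2)" .
  have "(\<Sum>b\<in>polys_deg_less M. eis_term a b n)
      = embA a * (- embA a) ^ n * (\<Sum>b\<in>polys_deg_less M. inverse ((?x + embA b) ^ Suc n))"
    by (simp add: eis_term_def sum_distrib_left divide_inverse)
  also have "(\<Sum>b\<in>polys_deg_less M. inverse ((?x + embA b) ^ Suc n)) = (\<Sum>v\<in>?V. inverse ((?x' + v) ^ Suc n))"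
    using sum_polys_deg_less_shift[OF assms(2), of "\<lambda>y. inverse ((?x + y) ^ Suc n)"] by (simp add: add.assoc)
  finally have "av (\<Sum>b\<in>polys_deg_less M. eis_term a b n) * \<delta> ^ n
      = ?A * (av (\<Sum>v\<in>?V. inverse ((?x' + v) ^ Suc n)) * ?\<sigma> ^ n)"
    by (simp add: power_mult_distrib mult_ac)
  also have "\<dots> \<le> ?A * inverse (?\<sigma> ^ 2)"
    using est \<open>0 < ?A\<close> by (intro mult_left_mono) auto
  also have "\<dots> = inverse (?A * \<delta> ^ 2)"
    using \<open>0 < ?A\<close> by (simp add: power2_eq_square field_simps)
  finally show ?thesis .
qed

lemma sum_eis_term_le:
  assumes "a \<noteq> 0"
  obtains M0 where "\<And>M n. M0 \<le> M \<Longrightarrow>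
    av (\<Sum>b\<in>polys_deg_less M. eis_term a b n) * \<delta> ^ n \<le> inverse (av (embA a) * \<delta> ^ 2)"
proof -
  obtain b0 where b0: "\<And>b. av (embA a * z + embA b0) \<le> av (embA a * z + embA b)"
    using exists_nearest_embA by blast
  have "av (\<Sum>b\<in>polys_deg_less M. eis_term a b n) * \<delta> ^ n \<le> inverse (av (embA a) * \<delta> ^ 2)"
    if "Suc (degree b0) \<le> M" for M n
    using that by (intro sum_eis_term_le_nearest[OF assms _ b0]) simp
  then show ?thesis
    by (rule that)
qed

lemma eis_inner_le:
  assumes "a \<noteq> 0"
  shows "av (eis_inner a n) * \<delta> ^ n \<le> inverse (av (embA a) * \<delta> ^ 2)"
proof -
  have conv: "av_conv av (\<lambda>M. \<Sum>b\<in>polys_deg_less M. eis_term a b n) (eis_inner a n)"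
    using eis_inner_conv[OF assms] by metis
  obtain M0 where M0: "\<And>M. M0 \<le> M \<Longrightarrow>
      av (\<Sum>b\<in>polys_deg_less M. eis_term a b n) * \<delta> ^ n \<le> inverse (av (embA a) * \<delta> ^ 2)"
    using sum_eis_term_le[OF assms] by metis
  have "av (eis_inner a n - 0) \<le> inverse (av (embA a) * \<delta> ^ 2) / \<delta> ^ n"
    using conv by (rule av_conv_bound[where N = M0]) (use M0 \<delta>_pos in \<open>simp add: pos_le_divide_eq\<close>)
  then show ?thesis
    using \<delta>_pos by (simp add: pos_le_divide_eq)
qed

lemma eis_term_sums:
  assumes "a \<noteq> 0" and "av \<epsilon> < \<delta>"
  shows "av_sums av (\<lambda>n. eis_term a b n * \<epsilon> ^ n) (embA a / (embA a * (z + \<epsilon>) + embA b))"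
proof -
  define x where "x = embA a * z + embA b"
  let ?A = "av (embA a)"
  have "0 < ?A"
    using assms(1) by (simp add: av_pos)
  have "?A * \<delta> \<le> av x"
    unfolding x_def by (rule av_embA_mult_add_ge[OF dist_ge assms(1)])
  moreover have "0 < ?A * \<delta>"
    using \<open>0 < ?A\<close> \<delta>_pos by simp
  ultimately have "x \<noteq> 0"
    by auto
  define w where "w = - (embA a * \<epsilon>) / x"
  have "?A * av \<epsilon> < ?A * \<delta>"
    using assms(2) \<open>0 < ?A\<close> by simp
  then have "av w < 1"
    using \<open>?A * \<delta> \<le> av x\<close> \<open>x \<noteq> 0\<close> by (simp add: w_def divide_less_eq av_pos)
  from av_sums_mult_left[OF av_sums_geometric[OF this], of "embA a / x"]
  have "av_sums av (\<lambda>n. embA a / x * w ^ n) (embA a / x * inverse (1 - w))" .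
  moreover have "embA a / x * w ^ n = eis_term a b n * \<epsilon> ^ n" for n
  proof -
    have "w ^ n = (- embA a) ^ n * \<epsilon> ^ n / x ^ n"
      by (simp only: w_def minus_mult_left power_divide power_mult_distrib)
    moreover have "eis_term a b n = embA a * (- embA a) ^ n / x ^ Suc n"
      by (simp only: eis_term_def x_def)
    ultimately show ?thesis
      by (simp add: mult_ac)
  qed
  moreover have "embA a / x * inverse (1 - w) = embA a / (embA a * (z + \<epsilon>) + embA b)"
  proof -
    have "1 - w = (x + embA a * \<epsilon>) / x"
      using \<open>x \<noteq> 0\<close> by (simp add: w_def field_simps)
    moreover have "x + embA a * \<epsilon> = embA a * (z + \<epsilon>) + embA b"
      by (simp add: x_def algebra_simps)
    ultimately show ?thesis
      using \<open>x \<noteq> 0\<close> by simp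
  qed
  ultimately show ?thesis
    by simp
qed

lemma eis_inner_sums:
  assumes "a \<noteq> 0" and "av \<epsilon> < \<delta>"
  shows "\<exists>L. av_sums av (\<lambda>n. eis_inner a n * \<epsilon> ^ n) L \<and>
    av_conv av (\<lambda>M. \<Sum>b\<in>polys_deg_less M. embA a / (embA a * (z + \<epsilon>) + embA b)) L"
proof -
  let ?B = "\<lambda>M. av (embA a) * inverse (real CARD('k) ^ M)"
  obtain M1 where tail: "\<And>n M. M1 \<le> M \<Longrightarrow>
      av (eis_inner a n - (\<Sum>b\<in>polys_deg_less M. eis_term a b n)) \<le> ?B M"
    using eis_inner_conv[OF assms(1)] by metis
  show ?thesis
  proof (rule av_sums_limit_interchange[where K = M1 and B = ?B])
    fix M
    have "av_sums av (\<lambda>n. \<Sum>b\<in>polys_deg_less M. eis_term a b n * \<epsilon> ^ n)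
        (\<Sum>b\<in>polys_deg_less M. embA a / (embA a * (z + \<epsilon>) + embA b))"
      by (intro av_sums_sum finite_polys_deg_less eis_term_sums assms)
    then show "av_sums av (\<lambda>n. (\<Sum>b\<in>polys_deg_less M. eis_term a b n) * \<epsilon> ^ n)
        (\<Sum>b\<in>polys_deg_less M. embA a / (embA a * (z + \<epsilon>) + embA b))"
      by (simp add: sum_distrib_right)
  next
    fix M n
    assume "M1 \<le> M"
    show "av ((\<Sum>b\<in>polys_deg_less M. eis_term a b n) * \<epsilon> ^ n - eis_inner a n * \<epsilon> ^ n) \<le> ?B M"
      using tail[OF \<open>M1 \<le> M\<close>, of n] assms(2) \<delta>_le_1 by (intro av_diff_mult_power_le[where r = 1]) auto
  next
    show "?B \<longlonglongrightarrow> 0"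
      by (rule tendsto_mult_right_zero[OF LIMSEQ_inverse_card_power])
    show "(\<lambda>n. av (eis_inner a n * \<epsilon> ^ n)) \<longlonglongrightarrow> 0"
      using eis_inner_le[OF assms(1)] assms(2) by (rule av_power_series_terms_tendsto_0)
  qed
qed

lemma eis_inner_le_degree:
  assumes "a \<noteq> 0" and "N \<le> degree a"
  shows "av (eis_inner a n) \<le> inverse (real CARD('k) ^ N) * (inverse (\<delta> ^ 2) * inverse (\<delta> ^ n))"
proof -
  have "real CARD('k) ^ N * \<delta> ^ 2 \<le> av (embA a) * \<delta> ^ 2"
    using av_embA[OF assms(1)] assms(2) card_ge_2 by (intro mult_right_mono power_increasing) auto
  then have "inverse (av (embA a) * \<delta> ^ 2) \<le> inverse (real CARD('k) ^ N * \<delta> ^ 2)"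
    using card_ge_2 \<delta>_pos by (intro le_imp_inverse_le) auto
  with eis_inner_le[OF assms(1), of n]
  have "av (eis_inner a n) * \<delta> ^ n \<le> inverse (real CARD('k) ^ N * \<delta> ^ 2)"
    by linarith
  then have "av (eis_inner a n) \<le> inverse (real CARD('k) ^ N * \<delta> ^ 2) / \<delta> ^ n"
    using \<delta>_pos by (simp add: pos_le_divide_eq)
  then show ?thesis
    by (simp add: divide_inverse mult.assoc)
qed

lemma eis_coeff_conv:
  "av_conv av (\<lambda>N. \<Sum>a\<in>monics_deg_less N. eis_inner a n) (eis_coeff n)"
  "av (eis_coeff n - (\<Sum>a\<in>monics_deg_less N. eis_inner a n))
    \<le> inverse (real CARD('k) ^ N) * (inverse (\<delta> ^ 2) * inverse (\<delta> ^ n))"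
proof -
  let ?S = "\<lambda>N. \<Sum>a\<in>monics_deg_less N. eis_inner a n"
  let ?c = "inverse (\<delta> ^ 2) * inverse (\<delta> ^ n)"
  have "\<exists>L. av_conv av ?S L \<and> (\<forall>N\<ge>0. av (L - ?S N) \<le> inverse (real CARD('k) ^ N) * ?c)"
  proof (rule av_conv_of_tail_bound)
    fix N m :: nat
    assume "N \<le> m"
    then have "?S m - ?S N = (\<Sum>a\<in>monics_deg_less m - monics_deg_less N. eis_inner a n)"
      by (simp add: sum_diff finite_monics_deg_less monics_deg_less_mono)
    moreover have "av (eis_inner a n) \<le> inverse (real CARD('k) ^ N) * ?c"
      if "a \<in> monics_deg_less m - monics_deg_less N" for a
      using that by (intro eis_inner_le_degree) (auto simp: monics_deg_less_def)
    ultimately show "av (?S m - ?S N) \<le> inverse (real CARD('k) ^ N) * ?c"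
      using \<delta>_pos by (auto intro!: av_sum_le)
  next
    show "(\<lambda>N. inverse (real CARD('k) ^ N) * ?c) \<longlonglongrightarrow> 0"
      by (rule tendsto_mult_left_zero[OF LIMSEQ_inverse_card_power])
  qed
  then obtain L where "av_conv av ?S L" "\<And>N. av (L - ?S N) \<le> inverse (real CARD('k) ^ N) * ?c"
    by auto
  moreover have "eis_coeff n = L"
    unfolding eis_coeff_def using \<open>av_conv av ?S L\<close> by (rule av_lim_eqI)
  ultimately show "av_conv av ?S (eis_coeff n)" "av (eis_coeff n - ?S N) \<le> inverse (real CARD('k) ^ N) * ?c"
    by simp_all
qed

lemma eis_coeff_le: "av (eis_coeff n) * \<delta> ^ n \<le> inverse (\<delta> ^ 2)"
proof -
  have "av (eis_coeff n - 0) \<le> inverse (\<delta> ^ 2) * inverse (\<delta> ^ n)"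
  proof (rule av_conv_bound[OF eis_coeff_conv(1), where N = 0])
    fix N
    have "av (eis_inner a n) \<le> inverse (\<delta> ^ 2) * inverse (\<delta> ^ n)" if "a \<in> monics_deg_less N" for a
      using eis_inner_le_degree[OF monics_deg_less_nonzero[OF that], of 0 n] by simp
    then show "av ((\<Sum>a\<in>monics_deg_less N. eis_inner a n) - 0) \<le> inverse (\<delta> ^ 2) * inverse (\<delta> ^ n)"
      using \<delta>_pos by (auto intro!: av_sum_le)
  qed
  then show ?thesis
    using \<delta>_pos by (simp add: field_simps)
qed

lemma Eis_sums:
  assumes "av \<epsilon> < \<delta>"
  shows "av_sums av (\<lambda>n. (inverse pibar * eis_coeff n) * \<epsilon> ^ n) (Eis av \<iota> pibar (z + \<epsilon>))"
proof -
  let ?B = "\<lambda>N. inverse (real CARD('k) ^ N) * inverse (\<delta> ^ 2)"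
  let ?inner = "\<lambda>a. av_lim av (\<lambda>M. \<Sum>b\<in>polys_deg_less M. embA a / (embA a * (z + \<epsilon>) + embA b))"
  have inner: "av_sums av (\<lambda>n. eis_inner a n * \<epsilon> ^ n) (?inner a)" if "a \<noteq> 0" for a
    using eis_inner_sums[OF that assms] av_lim_eqI by metis
  have "\<exists>L. av_sums av (\<lambda>n. eis_coeff n * \<epsilon> ^ n) L \<and>
      av_conv av (\<lambda>N. \<Sum>a\<in>monics_deg_less N. ?inner a) L"
  proof (rule av_sums_limit_interchange[where K = 0 and B = ?B])
    fix N
    have "av_sums av (\<lambda>n. \<Sum>a\<in>monics_deg_less N. eis_inner a n * \<epsilon> ^ n) (\<Sum>a\<in>monics_deg_less N. ?inner a)"
      by (intro av_sums_sum finite_monics_deg_less inner) (auto simp: monics_deg_less_def)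
    then show "av_sums av (\<lambda>n. (\<Sum>a\<in>monics_deg_less N. eis_inner a n) * \<epsilon> ^ n)
        (\<Sum>a\<in>monics_deg_less N. ?inner a)"
      by (simp add: sum_distrib_right)
  next
    fix N n
    have "av (eis_coeff n - (\<Sum>a\<in>monics_deg_less N. eis_inner a n)) * \<delta> ^ n \<le> ?B N"
      using eis_coeff_conv(2)[of n N] \<delta>_pos by (simp add: field_simps)
    then show "av ((\<Sum>a\<in>monics_deg_less N. eis_inner a n) * \<epsilon> ^ n - eis_coeff n * \<epsilon> ^ n) \<le> ?B N"
      using assms by (intro av_diff_mult_power_le) auto
  next
    show "?B \<longlonglongrightarrow> 0"
      by (rule tendsto_mult_left_zero[OF LIMSEQ_inverse_card_power])
    show "(\<lambda>n. av (eis_coeff n * \<epsilon> ^ n)) \<longlonglongrightarrow> 0"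
      using eis_coeff_le assms by (rule av_power_series_terms_tendsto_0)
  qed
  then obtain L where L: "av_sums av (\<lambda>n. eis_coeff n * \<epsilon> ^ n) L"
    "av_conv av (\<lambda>N. \<Sum>a\<in>monics_deg_less N. ?inner a) L"
    by blast
  have "Eis av \<iota> pibar (z + \<epsilon>) = inverse pibar * L"
    using av_lim_eqI[OF L(2)] by (simp add: Eis_def monics_deg_less_def polys_deg_less_def)
  then show ?thesis
    using av_sums_mult_left[OF L(1), of "inverse pibar"] by (simp add: mult.assoc)
qed

section \<open>Frobenius and the hyperderivatives\<close>

lemma eis_term_eq_power: "eis_term a b k = (-1) ^ k * eis_term a b 0 ^ Suc k"
  by (simp add: eis_term_def power_minus[of "embA a"] power_divide mult_ac)

lemma eis_inner_power_CHAR: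
  assumes "a \<noteq> 0" and "CHAR('c) ^ i = Suc k"
  shows "eis_inner a k = (-1) ^ k * eis_inner a 0 ^ Suc k"
proof -
  have conv: "av_conv av (\<lambda>M. \<Sum>b\<in>polys_deg_less M. eis_term a b n) (eis_inner a n)" for n
    using eis_inner_conv[OF assms(1)] by metis
  have "av_conv av (\<lambda>M. \<Sum>b\<in>polys_deg_less M. eis_term a b k) ((-1) ^ k * eis_inner a 0 ^ Suc k)"
    using av_conv_mult_left[OF av_conv_sum_power_CHAR[OF prime_CHAR conv[of 0], of i], of "(-1) ^ k"] assms(2)
    by (simp add: eis_term_eq_power[of a _ k] sum_distrib_left)
  with conv[of k] show ?thesis
    by (rule av_conv_unique)
qed

lemma eis_coeff_power_CHAR:
  assumes "CHAR('c) ^ i = Suc k"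
  shows "eis_coeff k = (-1) ^ k * eis_coeff 0 ^ Suc k"
proof -
  have "(\<Sum>a\<in>monics_deg_less N. eis_inner a k) = (-1) ^ k * (\<Sum>a\<in>monics_deg_less N. eis_inner a 0 ^ Suc k)" for N
    by (simp add: sum_distrib_left eis_inner_power_CHAR[OF monics_deg_less_nonzero assms])
  then have "av_conv av (\<lambda>N. \<Sum>a\<in>monics_deg_less N. eis_inner a k) ((-1) ^ k * eis_coeff 0 ^ Suc k)"
    using av_conv_mult_left[OF av_conv_sum_power_CHAR[OF prime_CHAR eis_coeff_conv(1)[of 0], of i], of "(-1) ^ k"] assms
    by simp
  with eis_coeff_conv(1)[of k] show ?thesis
    by (rule av_conv_unique)
qed

lemma Eis_eq: "Eis av \<iota> pibar z = inverse pibar * eis_coeff 0"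
  by (simp add: Eis_def eis_coeff_def eis_inner_def eis_term_def monics_deg_less_def polys_deg_less_def)

lemma hyperderiv_Eis: "hyperderiv av (Eis av \<iota> pibar) n z = inverse pibar * eis_coeff n"
proof -
  let ?E = "\<lambda>\<epsilon>. Eis av \<iota> pibar (z + \<epsilon>)" and ?c = "\<lambda>n. inverse pibar * eis_coeff n"
  have "0 < av (\<iota> fls_X)" "av (\<iota> fls_X) < 1"
    using card_ge_2 by (simp_all add: av_iota_fls_X inverse_less_1_iff)
  have "(THE c. \<exists>r>0. \<forall>\<epsilon>. av \<epsilon> < r \<longrightarrow> av_sums av (\<lambda>k. c k * \<epsilon> ^ k) (?E \<epsilon>)) = ?c"
  proof (rule the_equality)
    show "\<exists>r>0. \<forall>\<epsilon>. av \<epsilon> < r \<longrightarrow> av_sums av (\<lambda>k. ?c k * \<epsilon> ^ k) (?E \<epsilon>)"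
      using Eis_sums \<delta>_pos by blast
    fix c
    assume "\<exists>r>0. \<forall>\<epsilon>. av \<epsilon> < r \<longrightarrow> av_sums av (\<lambda>k. c k * \<epsilon> ^ k) (?E \<epsilon>)"
    then obtain r where "0 < r" and c: "\<And>\<epsilon>. av \<epsilon> < r \<Longrightarrow> av_sums av (\<lambda>k. c k * \<epsilon> ^ k) (?E \<epsilon>)"
      by blast
    from av_power_series_unique[OF \<open>0 < av (\<iota> fls_X)\<close> \<open>av (\<iota> fls_X) < 1\<close> \<open>0 < r\<close> \<delta>_pos c Eis_sums]
    show "c = ?c" .
  qed
  then show ?thesis
    by (simp add: hyperderiv_def)
qed

end

lemma inverse_neg_power_mult_cancel:
  fixes p e :: "'a::field"
  assumes "p \<noteq> 0"
  shows "inverse ((- p) ^ k) * (inverse p * ((-1) ^ k * (p * e) ^ Suc k)) = e ^ Suc k"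
proof -
  have "inverse ((- p) ^ k) * (-1) ^ k = inverse (p ^ k)"
    by (cases "even k") simp_all
  then have "inverse ((- p) ^ k) * (inverse p * ((-1) ^ k * (p * e) ^ Suc k))
      = inverse (p ^ k) * (inverse p * (p * e) ^ Suc k)"
    by (metis mult.assoc mult.left_commute)
  also have "\<dots> = e ^ Suc k"
    using assms by (simp add: field_simps)
  finally show ?thesis .
qed

theorem lemma8:
  fixes av :: "'c::field \<Rightarrow> real" and \<iota> :: "'k::{finite,field} fls \<Rightarrow> 'c"
    and pibar :: 'c and z :: 'c and i :: nat
  assumes "is_C av \<iota>"
    and "fundamental_period av \<iota> pibar"
    and "z \<in> Omega \<iota>"
  shows "inverse ((- pibar) ^ (CHAR('k) ^ i - 1)) * hyperderiv av (Eis av \<iota> pibar) (CHAR('k) ^ i - 1) z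
           = (Eis av \<iota> pibar z) ^ (CHAR('k) ^ i)"
proof -
  interpret Kinf_embedding av \<iota>
    using assms(1) unfolding is_C_def by unfold_locales auto
  have "z \<notin> range \<iota>"
    using assms(3) by (simp add: Omega_def)
  then obtain \<delta> where "0 < \<delta>" "\<delta> \<le> 1" "\<forall>f. \<delta> \<le> av (z - \<iota> f)"
    using Omega_dist_pos by blast
  then interpret Omega_point av \<iota> z \<delta>
    by unfold_locales auto
  have "pibar \<noteq> 0"
    using assms(2) by (simp add: fundamental_period_def)
  have "0 < CHAR('c) ^ i"
    using prime_gt_0_nat[OF prime_CHAR] by simp
  then obtain k where k: "CHAR('c) ^ i = Suc k"
    using gr0_conv_Suc by blast
  have "hyperderiv av (Eis av \<iota> pibar) k z = inverse pibar * ((-1) ^ k * eis_coeff 0 ^ Suc k)"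
    by (simp only: hyperderiv_Eis eis_coeff_power_CHAR[OF k])
  also have "eis_coeff 0 = pibar * Eis av \<iota> pibar z"
    using \<open>pibar \<noteq> 0\<close> by (simp add: Eis_eq)
  finally show ?thesis
    using k inverse_neg_power_mult_cancel[OF \<open>pibar \<noteq> 0\<close>] by (simp add: CHAR_eq)
qed

end
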